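(* Fix $\ell_0>0$, $h_0>0$ and a nonempty compact set $I\subset(0,h_0]$. There exist $U_0=U_0(I,\ell_0,d,t)$ and a function $\varepsilon_{\rm mag}(U,\beta;I)\ge0$ such that, for all $U\ge U_0$, all $\beta>0$ with $\beta J_0(U)\ge\ell_0$, all $L\in2\mathbb N$ and all $h\in I$, \[ \bigl|m^{\rm Hub}_{\Lambda_L,\beta,U}(h)-m^{\rm Heis}_{\Lambda_L,\beta,U}(h)\bigr|\le\varepsilon_{\rm mag}(U,\beta;I), \] and \[ \lim_{U\to\infty}\ \sup_{\beta>0:\ \beta J_0(U)\ge\ell_0}\varepsilon_{\rm mag}(U,\beta;I)=0 . \] (The estimate is uniform in $L$ and $h\in I$.)
   Context: Fix $d\ge 1$ and $t\in\mathbb R\setminus\{0\}$. For $L\in 2\mathbb N$ let $\Lambda_L=(\mathbb Z/L\mathbb Z)^d$ and $\mathscr B_{\Lambda_L}$ the set of unordered nearest-neighbour bonds of the torus, each counted once. Let $\mathcal H_{\Lambda_L}$ be the fermionic Fock space over $\ell^2(\Lambda_L)\otimes\mathbb C^2$ with CAR operators $c_{x\sigma},c^*_{x\sigma}$; $n_{x\sigma}=c^*_{x\sigma}c_{x\sigma}$, $n_x=n_{x\uparrow}+n_{x\downarrow}$, $N_{\Lambda_L}=\sum_xn_x$, $\mathcal H^{\rm hf}_{\Lambda_L}=\ker(N_{\Lambda_L}-|\Lambda_L|)$. Let $D_{\Lambda_L}=\sum_xn_{x\uparrow}n_{x\downarrow}$, $T_{\Lambda_L}=-t\sum_{\{x,y\}\in\mathscr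 B_{\Lambda_L}}\sum_\sigma(c^*_{x\sigma}c_{y\sigma}+c^*_{y\sigma}c_{x\sigma})$, $\eta_x=(-1)^{x_1+\dots+x_d}$, $S^{(3)}_x=\frac12(n_{x\uparrow}-n_{x\downarrow})$, $M_{\Lambda_L}=\sum_x\eta_xS^{(3)}_x$, and $H^{\rm Hub}_{\Lambda_L}(h)=UD_{\Lambda_L}+T_{\Lambda_L}-hM_{\Lambda_L}$ on $\mathcal H^{\rm hf}_{\Lambda_L}$ ($U>0$). The Hubbard Gibbs state is $\omega^{\rm Hub}_{\Lambda_L,\beta,U,h}(O)=\operatorname{Tr}_{\mathcal H^{\rm hf}}(Oe^{-\beta H^{\rm Hub}_{\Lambda_L}(h)})/\operatorname{Tr}_{\mathcal H^{\rm hf}}e^{-\beta H^{\rm Hub}_{\Lambda_L}(h)}$ and $m^{\rm Hub}_{\Lambda_L,\beta,U}(h)=|\Lambda_L|^{-1}\omega^{\rm Hub}_{\Lambda_L,\beta,U,h}(M_{\Lambda_L})$. Spin side: $\mathcal H^{\rm spin}_{\Lambda_L}=\bigotimes_{x}\mathbb C^2$, $S^{(a)}_x$ acts as $\frac12\sigma^{(a)}$ at $x$, $M^{\rm spin}_{\Lambda_L}=\sum_x\eta_xS^{(3)}_x$, $H^{\rm Heis}_{\Lambda_L}(J,h)=J\sum_{\{x,y\}\in\mathscr B_{\Lambda_L}}(\mathbf S_x\cdot\mathbf S_y-\frac14)-hM^{\rm spin}_{\Lambda_L}$, $J_0(U)=4t^2/U$; the Heisenberg Gibbs state $\omega^{\rm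 Heis}_{\Lambda_L,\beta,U,h}$ is the Gibbs state of $H^{\rm Heis}_{\Lambda_L}(J_0(U),h)$ on $\mathcal H^{\rm spin}_{\Lambda_L}$ and $m^{\rm Heis}_{\Lambda_L,\beta,U}(h)=|\Lambda_L|^{-1}\omega^{\rm Heis}_{\Lambda_L,\beta,U,h}(M^{\rm spin}_{\Lambda_L})$. *)

theory Defs
  imports Complex_Main "HOL-Library.Extended_Real"
begin

type_synonym 'b op = "'b \<Rightarrow> 'b \<Rightarrow> complex"  (* row index, column index *)

definition opmul :: "'b set \<Rightarrow> 'b op \<Rightarrow> 'b op \<Rightarrow> 'b op" where
  "opmul B A C = (\<lambda>i j. \<Sum>k\<in>B. A i k * C k j)"

definition opid :: "'b op" where
  "opid = (\<lambda>i j. if i = j then 1 else 0)"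

fun oppow :: "'b set \<Rightarrow> 'b op \<Rightarrow> nat \<Rightarrow> 'b op" where
  "oppow B A 0 = opid"
| "oppow B A (Suc n) = opmul B A (oppow B A n)"

definition opexp :: "'b set \<Rightarrow> 'b op \<Rightarrow> 'b op" where
  "opexp B A = (\<lambda>i j. \<Sum>n. oppow B A n i j / of_nat (fact n))"

definition optrace :: "'b set \<Rightarrow> 'b op \<Rightarrow> complex" where
  "optrace B A = (\<Sum>i\<in>B. A i i)"

definition gibbs :: "'b set \<Rightarrow> 'b op \<Rightarrow> real \<Rightarrow> 'b op \<Rightarrow> complex" where
  "gibbs B H \<beta> Obs =
     optrace B (opmul B Obs (opexp B (\<lambda>i j. - of_real \<beta> * H i j)))
     / optrace B (opexp B (\<lambda>i j. - of_real \<beta> * H i j))"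

(* sites are encoded as 0 .. L^d - 1; coordinate i is the i-th base-L digit *)
definition sites :: "nat \<Rightarrow> nat \<Rightarrow> nat set" where
  "sites L d = {0..<L ^ d}"

definition coord :: "nat \<Rightarrow> nat \<Rightarrow> nat \<Rightarrow> nat" where
  "coord L x i = (x div L ^ i) mod L"

definition eta :: "nat \<Rightarrow> nat \<Rightarrow> nat \<Rightarrow> complex" where
  "eta L d x = (-1) ^ (\<Sum>i<d. coord L x i)"

definition nbr :: "nat \<Rightarrow> nat \<Rightarrow> nat \<Rightarrow> nat \<Rightarrow> bool" where
  "nbr L d x y \<longleftrightarrow> (\<exists>i<d. coord L y i = (coord L x i + 1) mod L \<and>
                           (\<forall>j<d. j \<noteq> i \<longrightarrow> coord L y j = coord L x j))"

definition bonds :: "nat \<Rightarrow> nat \<Rightarrow> nat set set" where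
  "bonds L d = {{x, y} | x y. x \<in> sites L d \<and> y \<in> sites L d \<and> nbr L d x y}"

definition bond_pairs :: "nat set \<Rightarrow> (nat \<times> nat) set" where
  "bond_pairs b = {(x, y). x \<in> b \<and> y \<in> b \<and> x \<noteq> y}"

section \<open>Fermionic Fock space (occupation-number basis, Jordan-Wigner signs)\<close>

(* spin: True = up, False = down; mode (x,sigma) encoded as a natural number *)
definition mode :: "nat \<Rightarrow> bool \<Rightarrow> nat" where
  "mode x \<sigma> = 2 * x + (if \<sigma> then 0 else 1)"

definition fock_basis :: "nat \<Rightarrow> nat \<Rightarrow> nat set set" where
  "fock_basis L d = Pow {0..<2 * L ^ d}"

definition hf_basis :: "nat \<Rightarrow> nat \<Rightarrow> nat set set" where
  "hf_basis L d = {S \<in> fock_basis L d. card S = L ^ d}"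

definition ann :: "nat \<Rightarrow> nat set op" where
  "ann m = (\<lambda>S' S. if m \<in> S \<and> S' = S - {m} then (-1) ^ card {k \<in> S. k < m} else 0)"

definition cre :: "nat \<Rightarrow> nat set op" where
  "cre m = (\<lambda>S' S. cnj (ann m S S'))"

definition numop :: "nat \<Rightarrow> nat \<Rightarrow> nat \<Rightarrow> bool \<Rightarrow> nat set op" where
  "numop L d x \<sigma> = opmul (fock_basis L d) (cre (mode x \<sigma>)) (ann (mode x \<sigma>))"

definition Dop :: "nat \<Rightarrow> nat \<Rightarrow> nat set op" where
  "Dop L d = (\<lambda>i j. \<Sum>x\<in>sites L d.
      opmul (fock_basis L d) (numop L d x True) (numop L d x False) i j)"

definition Top :: "real \<Rightarrow> nat \<Rightarrow> nat \<Rightarrow> nat set op" where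
  "Top t L d = (\<lambda>i j. - of_real t * (\<Sum>b\<in>bonds L d. \<Sum>(x, y)\<in>bond_pairs b. \<Sum>\<sigma>\<in>(UNIV::bool set).
      opmul (fock_basis L d) (cre (mode x \<sigma>)) (ann (mode y \<sigma>)) i j))"

definition Mop :: "nat \<Rightarrow> nat \<Rightarrow> nat set op" where
  "Mop L d = (\<lambda>i j. \<Sum>x\<in>sites L d.
      eta L d x * (1/2) * (numop L d x True i j - numop L d x False i j))"

definition H_Hub :: "real \<Rightarrow> real \<Rightarrow> real \<Rightarrow> nat \<Rightarrow> nat \<Rightarrow> nat set op" where
  "H_Hub U t h L d = (\<lambda>i j. of_real U * Dop L d i j + Top t L d i j - of_real h * Mop L d i j)"

definition m_Hub :: "real \<Rightarrow> real \<Rightarrow> real \<Rightarrow> real \<Rightarrow> nat \<Rightarrow> nat \<Rightarrow> complex" where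
  "m_Hub t \<beta> U h L d = gibbs (hf_basis L d) (H_Hub U t h L d) \<beta> (Mop L d) / of_nat (L ^ d)"

section \<open>Spin-1/2 Heisenberg model (basis: set of up-spin sites)\<close>

definition spin_basis :: "nat \<Rightarrow> nat \<Rightarrow> nat set set" where
  "spin_basis L d = Pow (sites L d)"

definition S1 :: "nat \<Rightarrow> nat set op" where
  "S1 x = (\<lambda>A' A. if (x \<in> A \<and> A' = A - {x}) \<or> (x \<notin> A \<and> A' = insert x A) then 1/2 else 0)"

definition S2 :: "nat \<Rightarrow> nat set op" where
  "S2 x = (\<lambda>A' A. if x \<in> A \<and> A' = A - {x} then \<i>/2
                  else if x \<notin> A \<and> A' = insert x A then - \<i>/2 else 0)"

definition S3 :: "nat \<Rightarrow> nat set op" where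
  "S3 x = (\<lambda>A' A. if A' = A then (if x \<in> A then 1/2 else - 1/2) else 0)"

definition SdotS :: "nat \<Rightarrow> nat \<Rightarrow> nat \<Rightarrow> nat \<Rightarrow> nat set op" where
  "SdotS L d x y = (\<lambda>i j. opmul (spin_basis L d) (S1 x) (S1 y) i j
                        + opmul (spin_basis L d) (S2 x) (S2 y) i j
                        + opmul (spin_basis L d) (S3 x) (S3 y) i j)"

definition Mspin :: "nat \<Rightarrow> nat \<Rightarrow> nat set op" where
  "Mspin L d = (\<lambda>i j. \<Sum>x\<in>sites L d. eta L d x * S3 x i j)"

(* each bond b = {x,y} contributes S_x.S_y - 1/4; the ordered-pair sum counts it twice, hence 1/2 *)
definition H_Heis :: "real \<Rightarrow> real \<Rightarrow> nat \<Rightarrow> nat \<Rightarrow> nat set op" where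
  "H_Heis J h L d = (\<lambda>i j. of_real J * (\<Sum>b\<in>bonds L d. (1/2) * (\<Sum>(x, y)\<in>bond_pairs b.
        SdotS L d x y i j - (1/4) * opid i j)) - of_real h * Mspin L d i j)"

definition J0 :: "real \<Rightarrow> real \<Rightarrow> real" where
  "J0 t U = 4 * t\<^sup>2 / U"

definition m_Heis :: "real \<Rightarrow> real \<Rightarrow> real \<Rightarrow> real \<Rightarrow> nat \<Rightarrow> nat \<Rightarrow> complex" where
  "m_Heis t \<beta> U h L d = gibbs (spin_basis L d) (H_Heis (J0 t U) h L d) \<beta> (Mspin L d) / of_nat (L ^ d)"

end

theory Submission
  imports Defs "Jordan_Normal_Form.Schur_Decomposition" "HOL-Real_Asymp.Real_Asymp"
begin

lemma mat_adjoint_dim[simp]: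
  "dim_row (mat_adjoint A) = dim_col A" "dim_col (mat_adjoint A) = dim_row A"
  unfolding mat_adjoint_def by simp_all

lemma mat_adjoint_carrier[simp]: "A \<in> carrier_mat n m \<Longrightarrow> mat_adjoint A \<in> carrier_mat m n"
  by (intro carrier_matI) auto

lemma mat_adjoint_index[simp]:
  fixes A :: "complex mat"
  shows "i < dim_col A \<Longrightarrow> j < dim_row A \<Longrightarrow> mat_adjoint A $$ (i, j) = cnj (A $$ (j, i))"
  unfolding mat_adjoint_def by (simp add: mat_of_rows_index)

lemma index_mult_mat_sum:
  assumes "A \<in> carrier_mat n m" "B \<in> carrier_mat m p" "i < n" "j < p"
  shows "(A * B) $$ (i, j) = (\<Sum>k<m. A $$ (i, k) * B $$ (k, j))"
  using assms by (auto simp: scalar_prod_def atLeast0LessThan intro!: sum.cong)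

lemma mat_adjoint_mult:
  fixes A B :: "complex mat"
  assumes A: "A \<in> carrier_mat n m" and B: "B \<in> carrier_mat m p"
  shows "mat_adjoint (A * B) = mat_adjoint B * mat_adjoint A"
proof (rule eq_matI)
  fix i j assume "i < dim_row (mat_adjoint B * mat_adjoint A)" "j < dim_col (mat_adjoint B * mat_adjoint A)"
  then have i: "i < p" and j: "j < n" using A B by auto
  have "mat_adjoint (A * B) $$ (i, j) = cnj ((A * B) $$ (j, i))"
    using A B i j by simp
  also have "\<dots> = (\<Sum>k<m. cnj (A $$ (j, k)) * cnj (B $$ (k, i)))"
    using i j by (simp add: index_mult_mat_sum[OF A B] cnj_sum)
  also have "\<dots> = (mat_adjoint B * mat_adjoint A) $$ (i, j)"
    using A B i j
    by (subst index_mult_mat_sum[of _ p m _ n]) (auto simp: mult.commute intro!: sum.cong)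
  finally show "mat_adjoint (A * B) $$ (i, j) = (mat_adjoint B * mat_adjoint A) $$ (i, j)" .
qed (use A B in auto)

lemma mat_adjoint_mult_conj:
  fixes A W V :: "complex mat"
  assumes A: "A \<in> carrier_mat n n" and W: "W \<in> carrier_mat n n" and V: "V \<in> carrier_mat n n"
  shows "mat_adjoint (W * V) * A * (W * V) = mat_adjoint V * (mat_adjoint W * A * W) * V"
proof -
  have aW: "mat_adjoint W \<in> carrier_mat n n" and aV: "mat_adjoint V \<in> carrier_mat n n"
    using W V by auto
  have aWA: "mat_adjoint W * A \<in> carrier_mat n n" using mult_carrier_mat[OF aW A] .
  have "mat_adjoint (W * V) * A * (W * V) = mat_adjoint V * (mat_adjoint W * A) * (W * V)"
    by (simp add: mat_adjoint_mult[OF W V] assoc_mult_mat[OF aV aW A])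
  also have "\<dots> = mat_adjoint V * ((mat_adjoint W * A * W) * V)"
    by (simp add: assoc_mult_mat[OF aV aWA mult_carrier_mat[OF W V]] assoc_mult_mat[OF aWA W V])
  also have "\<dots> = mat_adjoint V * (mat_adjoint W * A * W) * V"
    by (rule assoc_mult_mat[OF aV mult_carrier_mat[OF aWA W] V, symmetric])
  finally show ?thesis .
qed

lemma mat_adjoint_adjoint[simp]: "mat_adjoint (mat_adjoint (A :: complex mat)) = A"
  by (rule eq_matI) auto

lemma mat_adjoint_four_block_mat:
  fixes A B C D :: "complex mat"
  assumes "A \<in> carrier_mat n1 m1" "B \<in> carrier_mat n1 m2" "C \<in> carrier_mat n2 m1" "D \<in> carrier_mat n2 m2"
  shows "mat_adjoint (four_block_mat A B C D)
       = four_block_mat (mat_adjoint A) (mat_adjoint C) (mat_adjoint B) (mat_adjoint D)"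
  using assms by (intro eq_matI) auto

definition unitary_mat :: "nat \<Rightarrow> complex mat \<Rightarrow> bool" where
  "unitary_mat n W \<longleftrightarrow> W \<in> carrier_mat n n \<and> mat_adjoint W * W = 1\<^sub>m n"

lemma unitary_mat_right_inverse: "unitary_mat n W \<Longrightarrow> W * mat_adjoint W = 1\<^sub>m n"
  unfolding unitary_mat_def using mat_mult_left_right_inverse[of "mat_adjoint W" n W] by auto

lemma unitary_mat_mult:
  assumes W: "unitary_mat n W" and V: "unitary_mat n V"
  shows "unitary_mat n (W * V)"
proof -
  have Wc: "W \<in> carrier_mat n n" and Vc: "V \<in> carrier_mat n n"
    using W V unfolding unitary_mat_def by auto
  have "mat_adjoint (W * V) * (W * V) = mat_adjoint V * ((mat_adjoint W * W) * V)"
    using Wc Vc by (simp add: mat_adjoint_mult[OF Wc Vc] assoc_mult_mat[of _ n n _ n _ n])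
  then show ?thesis using W V Wc Vc unfolding unitary_mat_def by simp
qed

lemma mat_adjoint_four_block_one:
  fixes U :: "complex mat"
  assumes "U \<in> carrier_mat m m"
  shows "mat_adjoint (four_block_mat (1\<^sub>m 1) (0\<^sub>m 1 m) (0\<^sub>m m 1) U)
       = four_block_mat (1\<^sub>m 1) (0\<^sub>m 1 m) (0\<^sub>m m 1) (mat_adjoint U)"
proof -
  have adj_one: "mat_adjoint (1\<^sub>m k :: complex mat) = 1\<^sub>m k" for k
    by (rule eq_matI) auto
  have adj_zero: "mat_adjoint (0\<^sub>m k l :: complex mat) = 0\<^sub>m l k" for k l
    by (rule eq_matI) auto
  show ?thesis
    by (simp only: mat_adjoint_four_block_mat[OF one_carrier_mat zero_carrier_mat zero_carrier_mat assms]
        adj_one adj_zero)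
qed

lemma unitary_mat_four_block:
  assumes "unitary_mat m U"
  shows "unitary_mat (Suc m) (four_block_mat (1\<^sub>m 1) (0\<^sub>m 1 m) (0\<^sub>m m 1) U)"
    (is "unitary_mat _ ?V")
proof -
  from assms have U: "U \<in> carrier_mat m m" and UU: "mat_adjoint U * U = 1\<^sub>m m"
    by (auto simp: unitary_mat_def)
  have "mat_adjoint ?V * ?V = four_block_mat (1\<^sub>m 1) (0\<^sub>m 1 m) (0\<^sub>m m 1) (1\<^sub>m m)"
    unfolding mat_adjoint_four_block_one[OF U]
    using U UU by (simp add: mult_four_block_mat[OF one_carrier_mat zero_carrier_mat
          zero_carrier_mat mat_adjoint_carrier[OF U] one_carrier_mat zero_carrier_mat zero_carrier_mat U])
  moreover have "?V \<in> carrier_mat (Suc m) (Suc m)"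
    using four_block_carrier_mat[OF one_carrier_mat[of 1] U] by (metis plus_1_eq_Suc)
  ultimately show ?thesis unfolding unitary_mat_def by simp
qed

lemma four_block_unitary_conj:
  fixes U A :: "complex mat"
  assumes U: "U \<in> carrier_mat m m" and A: "A \<in> carrier_mat m m"
  defines "V \<equiv> four_block_mat (1\<^sub>m 1) (0\<^sub>m 1 m) (0\<^sub>m m 1) U"
  shows "mat_adjoint V * four_block_mat (mat 1 1 (\<lambda>_. x)) (0\<^sub>m 1 m) (0\<^sub>m m 1) A * V
       = four_block_mat (mat 1 1 (\<lambda>_. x)) (0\<^sub>m 1 m) (0\<^sub>m m 1) (mat_adjoint U * A * U)"
proof -
  have x: "mat 1 1 (\<lambda>_. x) \<in> carrier_mat 1 1" by simp
  have UA: "mat_adjoint U * A \<in> carrier_mat m m" using mult_carrier_mat[OF mat_adjoint_carrier[OF U] A] .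
  have left: "mat_adjoint V * four_block_mat (mat 1 1 (\<lambda>_. x)) (0\<^sub>m 1 m) (0\<^sub>m m 1) A
      = four_block_mat (mat 1 1 (\<lambda>_. x)) (0\<^sub>m 1 m) (0\<^sub>m m 1) (mat_adjoint U * A)"
    unfolding V_def mat_adjoint_four_block_one[OF U] mult_four_block_mat[OF one_carrier_mat zero_carrier_mat
          zero_carrier_mat mat_adjoint_carrier[OF U] x zero_carrier_mat zero_carrier_mat A]
    using U A by (simp add: left_add_zero_mat[OF UA])
  have right: "four_block_mat (mat 1 1 (\<lambda>_. x)) (0\<^sub>m 1 m) (0\<^sub>m m 1) (mat_adjoint U * A) * V
      = four_block_mat (mat 1 1 (\<lambda>_. x)) (0\<^sub>m 1 m) (0\<^sub>m m 1) (mat_adjoint U * A * U)"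
    unfolding V_def mult_four_block_mat[OF x zero_carrier_mat zero_carrier_mat UA
          one_carrier_mat zero_carrier_mat zero_carrier_mat U]
    using U A by (simp add: left_add_zero_mat[OF mult_carrier_mat[OF UA U]])
  show ?thesis unfolding left right ..
qed

lemma cscalar_prod_self:
  assumes "w \<in> carrier_vec n"
  shows "w \<bullet>c w = complex_of_real (\<Sum>k<n. (cmod (w $ k))\<^sup>2)"
proof -
  have "w \<bullet>c w = (\<Sum>k<n. w $ k * cnj (w $ k))"
    using assms by (auto simp: scalar_prod_def atLeast0LessThan)
  also have "\<dots> = (\<Sum>k<n. complex_of_real ((cmod (w $ k))\<^sup>2))"
    by (intro sum.cong refl) (metis complex_norm_square of_real_power)
  finally show ?thesis by simp
qed

lemma unitary_mat_of_corthogonal: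
  fixes ws :: "complex vec list"
  assumes ws: "set ws \<subseteq> carrier_vec n" "length ws = n" and orth: "corthogonal ws"
  defines "nr \<equiv> \<lambda>j. sqrt (\<Sum>k<n. (cmod (ws ! j $ k))\<^sup>2)"
  shows "unitary_mat n (mat n n (\<lambda>(i, j). ws ! j $ i / complex_of_real (nr j)))"
    (is "unitary_mat n ?W")
proof -
  have wsj: "j < n \<Longrightarrow> ws ! j \<in> carrier_vec n" for j using ws by auto
  have sq: "ws ! j \<bullet>c ws ! j = complex_of_real (nr j * nr j)" if "j < n" for j
    using cscalar_prod_self[OF wsj[OF that]] unfolding nr_def by (simp add: sum_nonneg)
  have nr_pos: "nr j > 0" if j: "j < n" for j
  proof -
    have "ws ! j \<bullet>c ws ! j \<noteq> 0" using orth j ws by (auto simp: corthogonal_def)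
    then have "nr j \<noteq> 0" using sq[OF j] by auto
    moreover have "(\<Sum>k<n. (cmod (ws ! j $ k))\<^sup>2) \<ge> 0" by (simp add: sum_nonneg)
    ultimately show ?thesis unfolding nr_def by (simp add: less_le)
  qed
  have "mat_adjoint ?W * ?W = 1\<^sub>m n"
  proof (rule eq_matI)
    fix i j assume "i < dim_row (1\<^sub>m n :: complex mat)" "j < dim_col (1\<^sub>m n :: complex mat)"
    then have i: "i < n" and j: "j < n" by auto
    have "(mat_adjoint ?W * ?W) $$ (i, j)
        = (\<Sum>k<n. cnj (ws ! i $ k) * ws ! j $ k) / (complex_of_real (nr i) * complex_of_real (nr j))"
      using i j by (subst index_mult_mat_sum[of _ n n _ n]) (auto simp: sum_divide_distrib intro!: sum.cong)
    also have "(\<Sum>k<n. cnj (ws ! i $ k) * ws ! j $ k) = ws ! j \<bullet>c ws ! i"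
      using wsj[OF i] wsj[OF j] by (auto simp: scalar_prod_def atLeast0LessThan mult.commute intro!: sum.cong)
    finally show "(mat_adjoint ?W * ?W) $$ (i, j) = 1\<^sub>m n $$ (i, j)"
      using orth i j ws sq[OF i] nr_pos[OF i] by (auto simp: corthogonal_def)
  qed auto
  then show ?thesis unfolding unitary_mat_def by simp
qed

lemma unitary_completion:
  assumes v: "v \<in> carrier_vec n" and v0: "v \<noteq> 0\<^sub>v n"
  shows "\<exists>W c. unitary_mat n W \<and> col W 0 = c \<cdot>\<^sub>v v"
proof -
  interpret cof_vec_space n "TYPE(complex)" .
  define b where "b = basis_completion v"
  from basis_completion[OF v v0, folded b_def]
  have b: "distinct b" "\<not> lin_dep (set b)" "set b \<subseteq> carrier_vec n" "hd b = v" "length b = n"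
    by auto
  have "n \<noteq> 0" using v v0 by (intro notI) auto
  then obtain vs where bv: "b = v # vs" using b(4,5) by (cases b) auto
  define ws where "ws = gram_schmidt n b"
  have ws: "set ws \<subseteq> carrier_vec n" "corthogonal ws" "length ws = n"
    using gram_schmidt_result[OF b(3,1,2) refl, folded ws_def] b(5) by auto
  have "hd ws = v" unfolding ws_def bv using v by simp
  then have "ws ! 0 = v" using \<open>n \<noteq> 0\<close> ws(3) by (cases ws) auto
  define W where "W = mat n n (\<lambda>(i, j). ws ! j $ i / complex_of_real (sqrt (\<Sum>k<n. (cmod (ws ! j $ k))\<^sup>2)))"
  have "unitary_mat n W" unfolding W_def by (rule unitary_mat_of_corthogonal[OF ws(1,3,2)])
  moreover have "col W 0 = (1 / complex_of_real (sqrt (\<Sum>k<n. (cmod (v $ k))\<^sup>2))) \<cdot>\<^sub>v v"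
    using v \<open>ws ! 0 = v\<close> \<open>n \<noteq> 0\<close> by (intro eq_vecI) (auto simp: W_def)
  ultimately show ?thesis by blast
qed

lemma unitary_deflation:
  fixes A W :: "complex mat"
  assumes A: "A \<in> carrier_mat (Suc m) (Suc m)" "mat_adjoint A = A"
    and W: "unitary_mat (Suc m) W" and ev: "A *\<^sub>v col W 0 = e \<cdot>\<^sub>v col W 0"
  shows "\<exists>r A3. A3 \<in> carrier_mat m m \<and> mat_adjoint A3 = A3 \<and>
           mat_adjoint W * A * W = four_block_mat (mat 1 1 (\<lambda>_. complex_of_real r)) (0\<^sub>m 1 m) (0\<^sub>m m 1) A3"
proof -
  define n where "n = Suc m"
  have Wc: "W \<in> carrier_mat n n" and WW: "mat_adjoint W * W = 1\<^sub>m n"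
    using W unfolding unitary_mat_def n_def by auto
  define A' where "A' = mat_adjoint W * A * W"
  have A'c: "A' \<in> carrier_mat n n" unfolding A'_def using A Wc n_def by auto
  have A'_herm: "mat_adjoint A' = A'"
    unfolding A'_def using A Wc n_def
    by (simp add: mat_adjoint_mult[of _ n n _ n] mat_adjoint_mult[of _ n n _ n] assoc_mult_mat[of _ n n _ n _ n])
  have AW0: "(A * W) $$ (k, 0) = e * W $$ (k, 0)" if "k < n" for k
    using arg_cong[OF ev, of "\<lambda>x. x $ k"] A Wc that n_def by simp
  have col0: "A' $$ (i, 0) = (if i = 0 then e else 0)" if i: "i < n" for i
  proof -
    have Ac: "A \<in> carrier_mat n n" using A n_def by simp
    have "A' = mat_adjoint W * (A * W)" unfolding A'_def by (rule assoc_mult_mat[OF mat_adjoint_carrier[OF Wc] Ac Wc])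
    then have "A' $$ (i, 0) = (\<Sum>k<n. mat_adjoint W $$ (i, k) * (A * W) $$ (k, 0))"
      using index_mult_mat_sum[OF mat_adjoint_carrier[OF Wc] mult_carrier_mat[OF Ac Wc] i] n_def by simp
    also have "\<dots> = e * (mat_adjoint W * W) $$ (i, 0)"
      using index_mult_mat_sum[OF mat_adjoint_carrier[OF Wc] Wc i, of 0] n_def
      by (simp add: AW0 sum_distrib_left distrib_left mult.left_commute)
    finally show ?thesis using WW i n_def by simp
  qed
  have entry_herm: "A' $$ (i, j) = cnj (A' $$ (j, i))" if "i < n" "j < n" for i j
    using arg_cong[OF A'_herm, of "\<lambda>M. M $$ (i, j)"] A'c that by simp
  have e_real: "e = complex_of_real (Re e)"
    using entry_herm[of 0 0] col0[of 0] n_def by (simp add: complex_eq_iff)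
  have row0: "A' $$ (0, j) = (if j = 0 then e else 0)" if j: "j < n" for j
    using entry_herm[OF _ j, of 0] col0[OF j] e_real n_def by (metis complex_cnj_complex_of_real complex_cnj_zero zero_less_Suc)
  define A3 where "A3 = mat m m (\<lambda>(i, j). A' $$ (Suc i, Suc j))"
  have "mat_adjoint A3 = A3"
  proof (rule eq_matI)
    fix i j assume "i < dim_row A3" "j < dim_col A3"
    then show "mat_adjoint A3 $$ (i, j) = A3 $$ (i, j)"
      using arg_cong[OF A'_herm, of "\<lambda>M. M $$ (Suc i, Suc j)"] A'c n_def by (simp add: A3_def)
  qed (simp_all add: A3_def)
  moreover have "A' = four_block_mat (mat 1 1 (\<lambda>_. complex_of_real (Re e))) (0\<^sub>m 1 m) (0\<^sub>m m 1) A3"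
    using A'c col0 row0 e_real n_def by (intro eq_matI) (auto simp: A3_def)
  moreover have "A3 \<in> carrier_mat m m" unfolding A3_def by simp
  ultimately show ?thesis unfolding A'_def by blast
qed

lemma hermitian_mat_unitary_diagonalization:
  fixes A :: "complex mat"
  assumes "A \<in> carrier_mat n n" "mat_adjoint A = A"
  shows "\<exists>U d. unitary_mat n U \<and> mat_adjoint U * A * U = mat_diag n (\<lambda>k. complex_of_real (d k))"
  using assms
proof (induction n arbitrary: A)
  case 0
  then show ?case
    by (intro exI[of _ "1\<^sub>m 0"] exI) (auto simp: unitary_mat_def mat_diag_def intro!: eq_matI)
next
  case (Suc m)
  have A: "A \<in> carrier_mat (Suc m) (Suc m)" using Suc.prems(1) .
  obtain es where cp: "char_poly A = (\<Prod>a\<leftarrow>es. [:- a, 1:])" and "length es = Suc m"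
    using char_poly_factorized[OF A] by blast
  then obtain e es' where "es = e # es'" by (cases es) auto
  then have "eigenvalue A e" using eigenvalue_root_char_poly[OF A] cp by simp
  define v where "v = find_eigenvector A e"
  have v: "v \<in> carrier_vec (Suc m)" "v \<noteq> 0\<^sub>v (Suc m)" and Av: "A *\<^sub>v v = e \<cdot>\<^sub>v v"
    using find_eigenvector[OF A \<open>eigenvalue A e\<close>] A unfolding v_def eigenvector_def by auto
  obtain W c where W: "unitary_mat (Suc m) W" and Wv: "col W 0 = c \<cdot>\<^sub>v v"
    using unitary_completion[OF v] by blast
  have "A *\<^sub>v col W 0 = e \<cdot>\<^sub>v col W 0"
    unfolding Wv using A v Av by (simp add: mult_mat_vec smult_smult_assoc mult.commute)
  then obtain r A3 where A3: "A3 \<in> carrier_mat m m" "mat_adjoint A3 = A3"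
    and WAW: "mat_adjoint W * A * W = four_block_mat (mat 1 1 (\<lambda>_. complex_of_real r)) (0\<^sub>m 1 m) (0\<^sub>m m 1) A3"
    using unitary_deflation[OF A Suc.prems(2) W] by blast
  obtain U3 d3 where U3: "unitary_mat m U3"
    and U3A3: "mat_adjoint U3 * A3 * U3 = mat_diag m (\<lambda>k. complex_of_real (d3 k))"
    using Suc.IH[OF A3] by blast
  define V where "V = four_block_mat (1\<^sub>m 1) (0\<^sub>m 1 m) (0\<^sub>m m 1) U3"
  have V: "unitary_mat (Suc m) V" unfolding V_def by (rule unitary_mat_four_block[OF U3])
  have Wc: "W \<in> carrier_mat (Suc m) (Suc m)" and Vc: "V \<in> carrier_mat (Suc m) (Suc m)"
    and U3c: "U3 \<in> carrier_mat m m"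
    using W V U3 unfolding unitary_mat_def by auto
  have "mat_adjoint (W * V) * A * (W * V) = mat_adjoint V * (mat_adjoint W * A * W) * V"
    by (rule mat_adjoint_mult_conj[OF A Wc Vc])
  also have "\<dots> = four_block_mat (mat 1 1 (\<lambda>_. complex_of_real r)) (0\<^sub>m 1 m) (0\<^sub>m m 1)
                     (mat_diag m (\<lambda>k. complex_of_real (d3 k)))"
    unfolding WAW V_def four_block_unitary_conj[OF U3c A3(1)] U3A3 ..
  also have "\<dots> = mat_diag (Suc m) (\<lambda>k. complex_of_real (if k = 0 then r else d3 (k - 1)))"
    by (rule eq_matI) (auto simp: mat_diag_def)
  finally show ?case using unitary_mat_mult[OF W V]
    by (intro exI[of _ "W * V"] exI[of _ "\<lambda>k. if k = 0 then r else d3 (k - 1)"]) simp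
qed

definition hermitian_op :: "'b set \<Rightarrow> 'b op \<Rightarrow> bool" where
  "hermitian_op B H \<longleftrightarrow> (\<forall>i\<in>B. \<forall>j\<in>B. H i j = cnj (H j i))"

definition orthonormal_eigenbasis :: "'b set \<Rightarrow> 'b op \<Rightarrow> (nat \<Rightarrow> 'b \<Rightarrow> complex) \<Rightarrow> (nat \<Rightarrow> real) \<Rightarrow> bool" where
  "orthonormal_eigenbasis B H u lam \<longleftrightarrow>
     (\<forall>k<card B. \<forall>l<card B. (\<Sum>i\<in>B. cnj (u k i) * u l i) = (if k = l then 1 else 0)) \<and>
     (\<forall>i\<in>B. \<forall>j\<in>B. (\<Sum>k<card B. u k i * cnj (u k j)) = (if i = j then 1 else 0)) \<and>
     (\<forall>k<card B. \<forall>i\<in>B. (\<Sum>j\<in>B. H i j * u k j) = complex_of_real (lam k) * u k i)"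

lemma hermitian_op_eigenbasis:
  assumes fin: "finite B" and herm: "hermitian_op B H"
  shows "\<exists>u lam. orthonormal_eigenbasis B H u lam"
proof -
  define n where "n = card B"
  obtain e where e: "bij_betw e {..<n} B"
    using ex_bij_betw_nat_finite[OF fin] unfolding n_def atLeast0LessThan by blast
  define f where "f = the_inv_into {..<n} e"
  have f: "i \<in> B \<Longrightarrow> f i < n" "i \<in> B \<Longrightarrow> e (f i) = i" "a < n \<Longrightarrow> f (e a) = a" for i a
    using bij_betw_apply[OF bij_betw_the_inv_into[OF e]] e
    by (auto simp: f_def f_the_inv_into_f_bij_betw bij_betw_def the_inv_into_f_f)
  have reindex: "(\<Sum>i\<in>B. g i) = (\<Sum>a<n. g (e a))" for g :: "_ \<Rightarrow> complex"
    using sum.reindex_bij_betw[OF e, of g] by simp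
  define Hm where "Hm = mat n n (\<lambda>(a, b). H (e a) (e b))"
  have Hm: "Hm \<in> carrier_mat n n" unfolding Hm_def by simp
  have "mat_adjoint Hm = Hm"
  proof (rule eq_matI)
    fix a b assume "a < dim_row Hm" "b < dim_col Hm"
    then have "e a \<in> B" "e b \<in> B" using Hm bij_betw_apply[OF e] by auto
    then have "H (e a) (e b) = cnj (H (e b) (e a))"
      using herm unfolding hermitian_op_def by blast
    then show "mat_adjoint Hm $$ (a, b) = Hm $$ (a, b)"
      using \<open>a < dim_row Hm\<close> \<open>b < dim_col Hm\<close> Hm by (simp add: Hm_def)
  qed (use Hm in auto)
  then obtain U d where U: "unitary_mat n U"
    and UHU: "mat_adjoint U * Hm * U = mat_diag n (\<lambda>k. complex_of_real (d k))"
    using hermitian_mat_unitary_diagonalization[OF Hm] by blast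
  have Uc: "U \<in> carrier_mat n n" and UU: "mat_adjoint U * U = 1\<^sub>m n" and UU': "U * mat_adjoint U = 1\<^sub>m n"
    using U unitary_mat_right_inverse[OF U] unfolding unitary_mat_def by auto
  have HU: "Hm * U = U * mat_diag n (\<lambda>k. complex_of_real (d k))"
  proof -
    have aU: "mat_adjoint U \<in> carrier_mat n n" using Uc by simp
    have "Hm * U = (U * mat_adjoint U) * (Hm * U)"
      unfolding UU' by (rule left_mult_one_mat[OF mult_carrier_mat[OF Hm Uc], symmetric])
    also have "\<dots> = U * (mat_adjoint U * (Hm * U))"
      by (rule assoc_mult_mat[OF Uc aU mult_carrier_mat[OF Hm Uc]])
    also have "mat_adjoint U * (Hm * U) = mat_adjoint U * Hm * U"
      by (rule assoc_mult_mat[OF aU Hm Uc, symmetric])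
    finally show ?thesis unfolding UHU .
  qed
  have aU: "mat_adjoint U \<in> carrier_mat n n" using Uc by simp
  define u where "u k i = U $$ (f i, k)" for k i
  have "(\<Sum>i\<in>B. cnj (u k i) * u l i) = (if k = l then 1 else 0)" if k: "k < n" and l: "l < n" for k l
  proof -
    have "(\<Sum>i\<in>B. cnj (u k i) * u l i) = (\<Sum>a<n. mat_adjoint U $$ (k, a) * U $$ (a, l))"
      unfolding reindex u_def using f(3) Uc k by (intro sum.cong) auto
    also have "\<dots> = (mat_adjoint U * U) $$ (k, l)" by (rule index_mult_mat_sum[OF aU Uc k l, symmetric])
    finally show ?thesis using UU k l by simp
  qed
  moreover have "(\<Sum>k<n. u k i * cnj (u k j)) = (if i = j then 1 else 0)" if i: "i \<in> B" and j: "j \<in> B" for i j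
  proof -
    have fij: "f i = f j \<longleftrightarrow> i = j" using f(2) i j by metis
    have "(\<Sum>k<n. u k i * cnj (u k j)) = (\<Sum>k<n. U $$ (f i, k) * mat_adjoint U $$ (k, f j))"
      unfolding u_def using Uc f(1)[OF j] by (intro sum.cong) auto
    also have "\<dots> = (U * mat_adjoint U) $$ (f i, f j)"
      by (rule index_mult_mat_sum[OF Uc aU f(1)[OF i] f(1)[OF j], symmetric])
    also have "\<dots> = (if i = j then 1 else 0)"
      unfolding UU' using f(1)[OF i] f(1)[OF j] fij by simp
    finally show ?thesis .
  qed
  moreover have "(\<Sum>j\<in>B. H i j * u k j) = complex_of_real (d k) * u k i" if k: "k < n" and i: "i \<in> B" for k i
  proof -
    have "(\<Sum>j\<in>B. H i j * u k j) = (\<Sum>b<n. Hm $$ (f i, b) * U $$ (b, k))"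
      unfolding reindex u_def Hm_def using f i by (intro sum.cong) auto
    also have "\<dots> = (Hm * U) $$ (f i, k)" by (rule index_mult_mat_sum[OF Hm Uc f(1)[OF i] k, symmetric])
    also have "\<dots> = complex_of_real (d k) * u k i"
      unfolding HU u_def using Uc f(1)[OF i] k by (simp add: mat_diag_mult_right)
    finally show ?thesis .
  qed
  ultimately show ?thesis unfolding orthonormal_eigenbasis_def n_def[symmetric] by blast
qed

definition qform :: "'b set \<Rightarrow> 'b op \<Rightarrow> ('b \<Rightarrow> complex) \<Rightarrow> complex" where
  "qform B A v = (\<Sum>i\<in>B. \<Sum>j\<in>B. cnj (v i) * A i j * v j)"

definition sqnorm :: "'b set \<Rightarrow> ('b \<Rightarrow> complex) \<Rightarrow> real" where
  "sqnorm B v = (\<Sum>i\<in>B. (cmod (v i))\<^sup>2)"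

lemma cnj_mult_self: "cnj z * z = complex_of_real ((cmod z)\<^sup>2)"
  by (metis complex_norm_square mult.commute of_real_power)

lemma qform_diagonal:
  assumes fin: "finite B" and diag: "\<And>i j. i \<in> B \<Longrightarrow> j \<in> B \<Longrightarrow> A i j = (if i = j then complex_of_real (d i) else 0)"
  shows "qform B A v = complex_of_real (\<Sum>i\<in>B. d i * (cmod (v i))\<^sup>2)"
proof -
  have "qform B A v = (\<Sum>i\<in>B. cnj (v i) * complex_of_real (d i) * v i)"
    unfolding qform_def
  proof (rule sum.cong[OF refl])
    fix i assume i: "i \<in> B"
    have "(\<Sum>j\<in>B. cnj (v i) * A i j * v j) = (\<Sum>j\<in>B. if j = i then cnj (v i) * complex_of_real (d i) * v i else 0)"
      using diag i by (intro sum.cong) auto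
    then show "(\<Sum>j\<in>B. cnj (v i) * A i j * v j) = cnj (v i) * complex_of_real (d i) * v i"
      using fin i by simp
  qed
  also have "\<dots> = (\<Sum>i\<in>B. complex_of_real (d i * (cmod (v i))\<^sup>2))"
    by (intro sum.cong refl) (simp only: of_real_mult cnj_mult_self[symmetric] mult_ac)
  finally show ?thesis by simp
qed

lemma qform_diagonal_range:
  assumes fin: "finite B"
    and diag: "\<And>i j. i \<in> B \<Longrightarrow> j \<in> B \<Longrightarrow> A i j = (if i = j then complex_of_real (d i) else 0)"
    and bound: "\<And>i. i \<in> B \<Longrightarrow> - c \<le> d i \<and> d i \<le> c" and v: "sqnorm B v = 1"
  shows "qform B A v \<in> complex_of_real ` {- c..c}"
proof -
  have "(\<Sum>i\<in>B. (- c) * (cmod (v i))\<^sup>2) \<le> (\<Sum>i\<in>B. d i * (cmod (v i))\<^sup>2)"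
    by (intro sum_mono mult_right_mono) (auto simp: bound)
  moreover have "(\<Sum>i\<in>B. d i * (cmod (v i))\<^sup>2) \<le> (\<Sum>i\<in>B. c * (cmod (v i))\<^sup>2)"
    by (intro sum_mono mult_right_mono) (auto simp: bound)
  moreover have sum_e: "(\<Sum>i\<in>B. e * (cmod (v i))\<^sup>2) = e" for e
    using v unfolding sqnorm_def by (simp only: sum_distrib_left[symmetric] mult_1_right)
  ultimately have "(\<Sum>i\<in>B. d i * (cmod (v i))\<^sup>2) \<in> {- c..c}"
    by (simp only: atLeastAtMost_iff sum_e)
  moreover have "qform B A v = complex_of_real (\<Sum>i\<in>B. d i * (cmod (v i))\<^sup>2)"
    by (rule qform_diagonal[OF fin diag])
  ultimately show ?thesis by (simp only: image_eqI)
qed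

lemma qform_basis_vector:
  assumes fin: "finite B" and s: "s \<in> B"
  shows "qform B A (\<lambda>i. if i = s then 1 else 0) = A s s"
proof -
  have "qform B A (\<lambda>i. if i = s then 1 else 0) = (\<Sum>i\<in>B. if i = s then A s s else 0)"
    unfolding qform_def
  proof (rule sum.cong[OF refl])
    fix i assume "i \<in> B"
    have "(\<Sum>j\<in>B. cnj (if i = s then 1 else 0) * A i j * (if j = s then 1 else 0))
        = (\<Sum>j\<in>B. if j = s then (if i = s then A s s else 0) else 0)"
      by (intro sum.cong) auto
    then show "(\<Sum>j\<in>B. cnj (if i = s then 1 else 0) * A i j * (if j = s then 1 else 0))
        = (if i = s then A s s else 0)"
      using fin s by simp
  qed
  then show ?thesis using fin s by simp
qed

lemma sqnorm_basis_vector: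
  assumes "finite B" "s \<in> B"
  shows "sqnorm B (\<lambda>i. if i = s then 1 else 0) = 1"
proof -
  have "sqnorm B (\<lambda>i. if i = s then 1 else 0) = (\<Sum>i\<in>B. if i = s then 1 else 0)"
    unfolding sqnorm_def by (intro sum.cong) auto
  then show ?thesis using assms by simp
qed

lemma qform_add: "qform B (\<lambda>i j. A i j + C i j) v = qform B A v + qform B C v"
  unfolding qform_def by (simp add: algebra_simps sum.distrib)

lemma qform_diff: "qform B (\<lambda>i j. A i j - C i j) v = qform B A v - qform B C v"
  unfolding qform_def by (simp add: algebra_simps sum_subtractf)

lemma qform_scale: "qform B (\<lambda>i j. z * A i j) v = z * qform B A v"
  unfolding qform_def by (simp add: sum_distrib_left mult_ac)

lemma qform_sum: "qform B (\<lambda>i j. \<Sum>x\<in>X. F x i j) v = (\<Sum>x\<in>X. qform B (F x) v)"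
proof -
  have "qform B (\<lambda>i j. \<Sum>x\<in>X. F x i j) v = (\<Sum>i\<in>B. \<Sum>j\<in>B. \<Sum>x\<in>X. cnj (v i) * F x i j * v j)"
    unfolding qform_def by (simp add: sum_distrib_left sum_distrib_right)
  also have "\<dots> = (\<Sum>i\<in>B. \<Sum>x\<in>X. \<Sum>j\<in>B. cnj (v i) * F x i j * v j)"
    by (intro sum.cong refl) (rule sum.swap)
  also have "\<dots> = (\<Sum>x\<in>X. qform B (F x) v)" unfolding qform_def by (rule sum.swap)
  finally show ?thesis .
qed

lemma qform_spectral_expansion:
  fixes w :: "'b \<Rightarrow> complex"
  assumes "\<And>i j. i \<in> B \<Longrightarrow> j \<in> B \<Longrightarrow> F i j = (\<Sum>k<N. f k * u k i * cnj (u k j))"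
  defines "c \<equiv> \<lambda>k. \<Sum>j\<in>B. cnj (u k j) * w j"
  shows "qform B F w = (\<Sum>k<N. f k * cnj (c k) * c k)"
proof -
  have "qform B F w = (\<Sum>i\<in>B. \<Sum>j\<in>B. \<Sum>k<N. cnj (w i) * (f k * u k i * cnj (u k j)) * w j)"
    unfolding qform_def using assms(1) by (intro sum.cong refl) (simp add: sum_distrib_left sum_distrib_right)
  also have "\<dots> = (\<Sum>i\<in>B. \<Sum>k<N. \<Sum>j\<in>B. cnj (w i) * (f k * u k i * cnj (u k j)) * w j)"
    by (intro sum.cong refl) (rule sum.swap)
  also have "\<dots> = (\<Sum>k<N. \<Sum>i\<in>B. \<Sum>j\<in>B. cnj (w i) * (f k * u k i * cnj (u k j)) * w j)"
    by (rule sum.swap)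
  also have "\<dots> = (\<Sum>k<N. f k * (\<Sum>i\<in>B. cnj (w i) * u k i) * (\<Sum>j\<in>B. cnj (u k j) * w j))"
    by (intro sum.cong refl) (simp add: sum_distrib_left sum_distrib_right mult_ac)
  finally show ?thesis by (simp add: c_def cnj_sum mult.commute)
qed

lemma exp_series_sums: "(\<lambda>n. (z::complex) ^ n / of_nat (fact n)) sums exp z"
  using exp_converges[of z] by (simp add: scaleR_conv_of_real divide_inverse mult.commute)

context
  fixes B :: "'b set" and H :: "'b op" and u :: "nat \<Rightarrow> 'b \<Rightarrow> complex" and lam :: "nat \<Rightarrow> real"
  assumes fin: "finite B" and eb: "orthonormal_eigenbasis B H u lam"
begin

lemma eigenbasis_orthonormal: "k < card B \<Longrightarrow> l < card B \<Longrightarrow> (\<Sum>i\<in>B. cnj (u k i) * u l i) = (if k = l then 1 else 0)"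
  and eigenbasis_complete: "i \<in> B \<Longrightarrow> j \<in> B \<Longrightarrow> (\<Sum>k<card B. u k i * cnj (u k j)) = (if i = j then 1 else 0)"
  and eigenbasis_eigen: "k < card B \<Longrightarrow> i \<in> B \<Longrightarrow> (\<Sum>j\<in>B. H i j * u k j) = complex_of_real (lam k) * u k i"
  using eb unfolding orthonormal_eigenbasis_def by blast+

lemma eigenbasis_sqnorm:
  assumes "k < card B" shows "sqnorm B (u k) = 1"
proof -
  have "complex_of_real (sqnorm B (u k)) = (\<Sum>i\<in>B. cnj (u k i) * u k i)"
    by (simp add: sqnorm_def cnj_mult_self)
  then show ?thesis using eigenbasis_orthonormal[OF assms assms] by simp
qed

lemma eigenbasis_qform:
  assumes k: "k < card B" shows "qform B H (u k) = complex_of_real (lam k)"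
proof -
  have "qform B H (u k) = (\<Sum>i\<in>B. cnj (u k i) * (\<Sum>j\<in>B. H i j * u k j))"
    unfolding qform_def by (simp add: sum_distrib_left mult.assoc)
  also have "\<dots> = complex_of_real (lam k) * (\<Sum>i\<in>B. cnj (u k i) * u k i)"
    using k by (simp add: eigenbasis_eigen sum_distrib_left mult_ac)
  finally show ?thesis using eigenbasis_orthonormal[OF k k] by simp
qed

lemma eigenbasis_expansion:
  assumes i: "i \<in> B" and j: "j \<in> B"
  shows "H i j = (\<Sum>k<card B. complex_of_real (lam k) * u k i * cnj (u k j))"
proof -
  have "(\<Sum>k<card B. complex_of_real (lam k) * u k i * cnj (u k j)) = (\<Sum>k<card B. \<Sum>l\<in>B. H i l * u k l * cnj (u k j))"
    using i by (intro sum.cong refl) (simp add: eigenbasis_eigen[symmetric] sum_distrib_right)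
  also have "\<dots> = (\<Sum>l\<in>B. H i l * (\<Sum>k<card B. u k l * cnj (u k j)))"
    by (subst sum.swap) (simp add: sum_distrib_left mult.assoc)
  also have "\<dots> = (\<Sum>l\<in>B. if l = j then H i l else 0)"
    using j by (intro sum.cong refl) (simp add: eigenbasis_complete)
  also have "\<dots> = H i j" using j fin by simp
  finally show ?thesis ..
qed

lemma eigenbasis_parseval:
  "sqnorm B w = (\<Sum>k<card B. (cmod (\<Sum>j\<in>B. cnj (u k j) * w j))\<^sup>2)"
proof -
  have "complex_of_real (sqnorm B w) = qform B opid w"
    using qform_diagonal[OF fin, of opid "\<lambda>_. 1" w] by (simp add: opid_def sqnorm_def)
  also have "\<dots> = (\<Sum>k<card B. 1 * cnj (\<Sum>j\<in>B. cnj (u k j) * w j) * (\<Sum>j\<in>B. cnj (u k j) * w j))"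
    by (rule qform_spectral_expansion) (simp add: eigenbasis_complete opid_def)
  finally show ?thesis by (simp only: mult_1_left cnj_mult_self of_real_sum[symmetric] of_real_eq_iff)
qed

lemma eigenbasis_ground_le:
  assumes w: "sqnorm B w = 1"
  shows "\<exists>k<card B. lam k \<le> Re (qform B H w)"
proof -
  define c where "c k = (\<Sum>j\<in>B. cnj (u k j) * w j)" for k
  have "card B \<noteq> 0" using w fin by (auto simp: sqnorm_def)
  define k0 where "k0 = arg_min_on lam {..<card B}"
  have k0: "k0 < card B" "\<And>k. k < card B \<Longrightarrow> lam k0 \<le> lam k"
    using arg_min_if_finite(1)[of "{..<card B}" lam] arg_min_least[of "{..<card B}" _ lam] \<open>card B \<noteq> 0\<close>
    unfolding k0_def by auto
  have "qform B H w = (\<Sum>k<card B. complex_of_real (lam k) * cnj (c k) * c k)"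
    unfolding c_def by (rule qform_spectral_expansion) (simp add: eigenbasis_expansion)
  then have "Re (qform B H w) = (\<Sum>k<card B. lam k * (cmod (c k))\<^sup>2)"
    by (simp add: cnj_mult_self mult.assoc)
  moreover have "(\<Sum>k<card B. lam k0 * (cmod (c k))\<^sup>2) \<le> (\<Sum>k<card B. lam k * (cmod (c k))\<^sup>2)"
    using k0(2) by (intro sum_mono mult_right_mono) auto
  moreover have "(\<Sum>k<card B. (cmod (c k))\<^sup>2) = 1" using eigenbasis_parseval[of w] w unfolding c_def by simp
  ultimately show ?thesis using k0(1) by (metis mult.right_neutral sum_distrib_left)
qed

lemma oppow_eigen_expansion:
  assumes i: "i \<in> B" and j: "j \<in> B"
  shows "oppow B (\<lambda>i j. z * H i j) n i j = (\<Sum>k<card B. (z * complex_of_real (lam k)) ^ n * u k i * cnj (u k j))"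
  using i j
proof (induction n arbitrary: i)
  case 0
  then show ?case using j by (simp add: opid_def eigenbasis_complete)
next
  case (Suc n)
  have "oppow B (\<lambda>i j. z * H i j) (Suc n) i j
      = (\<Sum>l\<in>B. z * H i l * (\<Sum>k<card B. (z * complex_of_real (lam k)) ^ n * u k l * cnj (u k j)))"
    using Suc.IH j by (simp add: opmul_def mult.assoc cong: sum.cong)
  also have "\<dots> = (\<Sum>l\<in>B. \<Sum>k<card B. z * H i l * u k l * ((z * complex_of_real (lam k)) ^ n * cnj (u k j)))"
    by (simp add: sum_distrib_left mult_ac)
  also have "\<dots> = (\<Sum>k<card B. \<Sum>l\<in>B. z * H i l * u k l * ((z * complex_of_real (lam k)) ^ n * cnj (u k j)))"
    by (rule sum.swap)
  also have "\<dots> = (\<Sum>k<card B. z * (\<Sum>l\<in>B. H i l * u k l) * ((z * complex_of_real (lam k)) ^ n * cnj (u k j)))"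
    by (simp add: sum_distrib_left sum_distrib_right mult_ac)
  also have "\<dots> = (\<Sum>k<card B. (z * complex_of_real (lam k)) ^ Suc n * u k i * cnj (u k j))"
    using Suc.prems by (intro sum.cong refl) (simp add: eigenbasis_eigen mult_ac)
  finally show ?case .
qed

lemma opexp_eigen_expansion:
  assumes i: "i \<in> B" and j: "j \<in> B"
  shows "opexp B (\<lambda>i j. z * H i j) i j = (\<Sum>k<card B. exp (z * complex_of_real (lam k)) * u k i * cnj (u k j))"
proof -
  have "opexp B (\<lambda>i j. z * H i j) i j
      = (\<Sum>n. \<Sum>k<card B. (z * complex_of_real (lam k)) ^ n / of_nat (fact n) * (u k i * cnj (u k j)))"
    unfolding opexp_def oppow_eigen_expansion[OF i j] by (simp add: sum_divide_distrib mult_ac)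
  also have "\<dots> = (\<Sum>k<card B. \<Sum>n. (z * complex_of_real (lam k)) ^ n / of_nat (fact n) * (u k i * cnj (u k j)))"
    by (rule suminf_sum) (rule summable_mult2, rule sums_summable[OF exp_series_sums])
  also have "\<dots> = (\<Sum>k<card B. exp (z * complex_of_real (lam k)) * (u k i * cnj (u k j)))"
    by (intro sum.cong refl sums_unique[symmetric] sums_mult2 exp_series_sums)
  finally show ?thesis by (simp add: mult.assoc)
qed

lemma gibbs_eigen_average:
  "gibbs B H \<beta> Obs = (\<Sum>k<card B. complex_of_real (exp (- \<beta> * lam k)) * qform B Obs (u k))
                     / complex_of_real (\<Sum>k<card B. exp (- \<beta> * lam k))"
proof -
  define E where "E = opexp B (\<lambda>i j. - complex_of_real \<beta> * H i j)"
  have E: "E i j = (\<Sum>k<card B. complex_of_real (exp (- \<beta> * lam k)) * u k i * cnj (u k j))"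
    if "i \<in> B" "j \<in> B" for i j
    unfolding E_def opexp_eigen_expansion[OF that] by (simp flip: exp_of_real)
  have "optrace B E = (\<Sum>k<card B. complex_of_real (exp (- \<beta> * lam k)) * (\<Sum>i\<in>B. cnj (u k i) * u k i))"
    unfolding optrace_def using E
    by (simp add: sum.swap[of _ B "{..<card B}"] sum_distrib_left mult_ac cong: sum.cong)
  also have "\<dots> = complex_of_real (\<Sum>k<card B. exp (- \<beta> * lam k))"
    by (simp add: eigenbasis_orthonormal)
  finally have tr: "optrace B E = complex_of_real (\<Sum>k<card B. exp (- \<beta> * lam k))" .
  have "optrace B (opmul B Obs E) = (\<Sum>i\<in>B. \<Sum>j\<in>B. Obs i j * E j i)"
    unfolding optrace_def opmul_def ..
  also have "\<dots> = (\<Sum>k<card B. complex_of_real (exp (- \<beta> * lam k)) * qform B Obs (u k))"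
    unfolding qform_def using E
    by (simp add: sum.swap[of _ B "{..<card B}"] sum_distrib_left mult_ac cong: sum.cong)
  finally show ?thesis unfolding gibbs_def E_def[symmetric] tr by simp
qed

end

lemma boltzmann_average_near_max:
  fixes lam r :: "nat \<Rightarrow> real" and N :: nat
  assumes r: "\<And>k. k < N \<Longrightarrow> - c \<le> r k \<and> r k \<le> c"
    and lower: "\<And>k. k < N \<Longrightarrow> - h * r k - E \<le> lam k"
    and ground: "k0 < N" "lam k0 \<le> E - h * c"
    and \<beta>: "\<beta> > 0" and h: "h > 0" and a: "a > 0"
  defines "w \<equiv> \<lambda>k. exp (- \<beta> * lam k)"
  defines "g \<equiv> (\<Sum>k<N. w k * r k) / (\<Sum>k<N. w k)"
  shows "g \<le> c \<and> c - g \<le> (2 * E + a) / h + 2 * c * N * exp (- \<beta> * a)"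
proof -
  define k1 where "k1 = arg_min_on lam {..<N}"
  have k1: "k1 < N" "\<And>k. k < N \<Longrightarrow> lam k1 \<le> lam k"
    using arg_min_if_finite(1)[of "{..<N}" lam] arg_min_least[of "{..<N}" _ lam] ground(1)
    unfolding k1_def by auto
  have w_pos: "w k > 0" for k unfolding w_def by simp
  define S where "S = (\<Sum>k<N. w k)"
  have S_pos: "S > 0" unfolding S_def using ground(1) w_pos by (intro sum_pos) auto
  define X where "X = (2 * E + a) / h"
  have "0 \<le> h * c - h * r k0" using r[OF ground(1)] h by (simp flip: right_diff_distrib)
  then have "0 \<le> 2 * E + a" using lower[OF ground(1)] ground(2) a by linarith
  then have X: "X \<ge> 0" unfolding X_def using h by simp
  have each: "w k * (c - r k) \<le> w k * X + S * exp (- \<beta> * a) * (2 * c)" if k: "k < N" for k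
  proof (cases "lam k \<le> lam k1 + a")
    case True
    have "h * (c - r k) \<le> 2 * E + a"
      using lower[OF k] True k1(2)[OF ground(1)] ground(2) by (simp add: algebra_simps)
    then have "c - r k \<le> X" unfolding X_def using h by (simp add: le_divide_eq mult.commute)
    then have "w k * (c - r k) \<le> w k * X" using w_pos by (simp add: less_imp_le)
    moreover have "c \<ge> 0" using r[OF k] by linarith
    then have "S * exp (- \<beta> * a) * (2 * c) \<ge> 0" using S_pos by simp
    ultimately show ?thesis by linarith
  next
    case False
    have "\<beta> * (a + lam k1) \<le> \<beta> * lam k" using False \<beta> by (intro mult_left_mono) auto
    then have "w k \<le> w k1 * exp (- \<beta> * a)"
      unfolding w_def by (simp add: exp_add[symmetric] algebra_simps)
    also have "w k1 \<le> S" unfolding S_def using k1(1) w_pos by (intro member_le_sum) (auto simp: less_imp_le)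
    finally have "w k \<le> S * exp (- \<beta> * a)" by simp
    then have "w k * (c - r k) \<le> S * exp (- \<beta> * a) * (2 * c)"
      using r[OF k] w_pos[of k] by (intro mult_mono) auto
    moreover have "w k * X \<ge> 0" using w_pos X by (simp add: less_imp_le)
    ultimately show ?thesis by linarith
  qed
  have Sg: "S * g = (\<Sum>k<N. w k * r k)" unfolding g_def S_def using S_pos[unfolded S_def] by simp
  have "S * (c - g) = (\<Sum>k<N. w k * (c - r k))"
    unfolding right_diff_distrib Sg by (simp add: S_def sum_distrib_left sum_subtractf mult.commute)
  also have "\<dots> \<le> (\<Sum>k<N. w k * X + S * exp (- \<beta> * a) * (2 * c))"
    using each by (intro sum_mono) auto
  also have "\<dots> = S * (X + 2 * c * N * exp (- \<beta> * a))"
    by (simp add: sum.distrib S_def sum_distrib_left sum_distrib_right algebra_simps)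
  finally have "c - g \<le> X + 2 * c * N * exp (- \<beta> * a)"
    using S_pos by (simp add: mult_le_cancel_left_pos)
  moreover have "S * g \<le> S * c"
    unfolding Sg unfolding S_def sum_distrib_right using r w_pos by (intro sum_mono mult_left_mono) (auto simp: less_imp_le)
  then have "g \<le> c" using S_pos by simp
  ultimately show ?thesis unfolding X_def by simp
qed

lemma gibbs_near_max:
  fixes H Obs :: "'b op" and w :: "'b \<Rightarrow> complex"
  assumes fin: "finite B" and herm: "hermitian_op B H"
    and obs: "\<And>v. sqnorm B v = 1 \<Longrightarrow> qform B Obs v \<in> complex_of_real ` {- c..c}"
    and lower: "\<And>v. sqnorm B v = 1 \<Longrightarrow> - h * Re (qform B Obs v) - E \<le> Re (qform B H v)"
    and trial: "sqnorm B w = 1" "Re (qform B H w) \<le> E - h * c"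
    and \<beta>: "\<beta> > 0" and h: "h > 0" and a: "a > 0"
  shows "\<exists>g. gibbs B H \<beta> Obs = complex_of_real g \<and> g \<le> c \<and>
             c - g \<le> (2 * E + a) / h + 2 * c * card B * exp (- \<beta> * a)"
proof -
  obtain u lam where eb: "orthonormal_eigenbasis B H u lam"
    using hermitian_op_eigenbasis[OF fin herm] by blast
  define r where "r k = Re (qform B Obs (u k))" for k
  have r: "qform B Obs (u k) = complex_of_real (r k) \<and> - c \<le> r k \<and> r k \<le> c" if "k < card B" for k
    using obs[OF eigenbasis_sqnorm[OF fin eb that]] unfolding r_def by auto
  have "- h * r k - E \<le> lam k" if "k < card B" for k
    using lower[OF eigenbasis_sqnorm[OF fin eb that]] eigenbasis_qform[OF fin eb that] r[OF that] by simp
  moreover obtain k0 where "k0 < card B" "lam k0 \<le> Re (qform B H w)"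
    using eigenbasis_ground_le[OF fin eb trial(1)] by blast
  ultimately have bound: "(\<Sum>k<card B. exp (- \<beta> * lam k) * r k) / (\<Sum>k<card B. exp (- \<beta> * lam k)) \<le> c \<and>
      c - (\<Sum>k<card B. exp (- \<beta> * lam k) * r k) / (\<Sum>k<card B. exp (- \<beta> * lam k))
        \<le> (2 * E + a) / h + 2 * c * card B * exp (- \<beta> * a)"
    using boltzmann_average_near_max[of "card B" c r h E lam k0 \<beta> a] r trial(2) \<beta> h a by force
  have "gibbs B H \<beta> Obs = complex_of_real
      ((\<Sum>k<card B. exp (- \<beta> * lam k) * r k) / (\<Sum>k<card B. exp (- \<beta> * lam k)))"
    unfolding gibbs_eigen_average[OF fin eb] using r by simp
  with bound show ?thesis by blast
qed

definition schur_bounded :: "'b set \<Rightarrow> 'b op \<Rightarrow> real \<Rightarrow> bool" where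
  "schur_bounded B A s \<longleftrightarrow>
     (\<forall>i\<in>B. (\<Sum>j\<in>B. cmod (A i j)) \<le> s) \<and> (\<forall>j\<in>B. (\<Sum>i\<in>B. cmod (A i j)) \<le> s)"

lemma schur_bounded_mono: "schur_bounded B A s \<Longrightarrow> s \<le> s' \<Longrightarrow> schur_bounded B A s'"
  unfolding schur_bounded_def by force

lemma schur_bounded_sparse:
  assumes fin: "finite B" and s: "s \<ge> 0" and bound: "\<And>i j. i \<in> B \<Longrightarrow> j \<in> B \<Longrightarrow> cmod (A i j) \<le> s"
    and supp: "\<And>i j. i \<in> B \<Longrightarrow> j \<in> B \<Longrightarrow> A i j \<noteq> 0 \<Longrightarrow> j = p i \<and> i = q j"
  shows "schur_bounded B A s"
  unfolding schur_bounded_def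
proof safe
  fix i assume i: "i \<in> B"
  have "(\<Sum>j\<in>B. cmod (A i j)) = (\<Sum>j\<in>B. if j = p i then cmod (A i j) else 0)"
    using supp i by (intro sum.cong) auto
  then show "(\<Sum>j\<in>B. cmod (A i j)) \<le> s" using fin i s bound by (simp add: sum.delta)
next
  fix j assume j: "j \<in> B"
  have "(\<Sum>i\<in>B. cmod (A i j)) = (\<Sum>i\<in>B. if i = q j then cmod (A i j) else 0)"
    using supp j by (intro sum.cong) auto
  then show "(\<Sum>i\<in>B. cmod (A i j)) \<le> s" using fin j s bound by (simp add: sum.delta)
qed

lemma schur_bounded_opid: "finite B \<Longrightarrow> schur_bounded B opid 1"
  by (rule schur_bounded_sparse[where p = id and q = id]) (auto simp: opid_def split: if_splits)

lemma schur_bounded_add: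
  "schur_bounded B A a \<Longrightarrow> schur_bounded B C c \<Longrightarrow> schur_bounded B (\<lambda>i j. A i j + C i j) (a + c)"
  unfolding schur_bounded_def
  by (auto intro!: order.trans[OF sum_mono[OF norm_triangle_ineq]] simp: sum.distrib add_mono)

lemma schur_bounded_diff:
  "schur_bounded B A a \<Longrightarrow> schur_bounded B C c \<Longrightarrow> schur_bounded B (\<lambda>i j. A i j - C i j) (a + c)"
  unfolding schur_bounded_def
  by (auto intro!: order.trans[OF sum_mono[OF norm_triangle_ineq4]] simp: sum.distrib add_mono)

lemma schur_bounded_scale: "schur_bounded B A a \<Longrightarrow> schur_bounded B (\<lambda>i j. z * A i j) (cmod z * a)"
  unfolding schur_bounded_def by (auto simp: norm_mult sum_distrib_left[symmetric] mult_left_mono)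

lemma schur_bounded_opmul:
  assumes A: "schur_bounded B A a" and C: "schur_bounded B C c" and a: "a \<ge> 0" and c: "c \<ge> 0"
  shows "schur_bounded B (opmul B A C) (a * c)"
  unfolding schur_bounded_def opmul_def
proof safe
  fix i assume i: "i \<in> B"
  have "(\<Sum>j\<in>B. cmod (\<Sum>k\<in>B. A i k * C k j)) \<le> (\<Sum>j\<in>B. \<Sum>k\<in>B. cmod (A i k) * cmod (C k j))"
    by (intro sum_mono order.trans[OF norm_sum]) (simp add: norm_mult)
  also have "\<dots> = (\<Sum>k\<in>B. cmod (A i k) * (\<Sum>j\<in>B. cmod (C k j)))"
    by (subst sum.swap) (simp add: sum_distrib_left)
  also have "\<dots> \<le> (\<Sum>k\<in>B. cmod (A i k) * c)"
    using C unfolding schur_bounded_def by (intro sum_mono mult_left_mono) auto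
  also have "\<dots> \<le> a * c"
    using A i c unfolding schur_bounded_def by (simp add: sum_distrib_right[symmetric] mult_right_mono)
  finally show "(\<Sum>j\<in>B. cmod (\<Sum>k\<in>B. A i k * C k j)) \<le> a * c" .
next
  fix j assume j: "j \<in> B"
  have "(\<Sum>i\<in>B. cmod (\<Sum>k\<in>B. A i k * C k j)) \<le> (\<Sum>i\<in>B. \<Sum>k\<in>B. cmod (A i k) * cmod (C k j))"
    by (intro sum_mono order.trans[OF norm_sum]) (simp add: norm_mult)
  also have "\<dots> = (\<Sum>k\<in>B. cmod (C k j) * (\<Sum>i\<in>B. cmod (A i k)))"
    by (subst sum.swap) (simp add: sum_distrib_left mult.commute)
  also have "\<dots> \<le> (\<Sum>k\<in>B. cmod (C k j) * a)"
    using A unfolding schur_bounded_def by (intro sum_mono mult_left_mono) auto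
  also have "\<dots> = a * (\<Sum>k\<in>B. cmod (C k j))" by (simp add: sum_distrib_left mult.commute)
  also have "\<dots> \<le> a * c" using C j a unfolding schur_bounded_def by (simp add: mult_left_mono)
  finally show "(\<Sum>i\<in>B. cmod (\<Sum>k\<in>B. A i k * C k j)) \<le> a * c" .
qed

lemma qform_le_split_bound:
  assumes fin: "finite B" and A: "schur_bounded B A s"
    and split: "\<And>i j. i \<in> B \<Longrightarrow> j \<in> B \<Longrightarrow> cmod (v i) * cmod (A i j) * cmod (v j) \<le> cmod (A i j) * (f i + f j)"
    and f: "\<And>i. i \<in> B \<Longrightarrow> f i \<ge> 0"
  shows "cmod (qform B A v) \<le> 2 * s * (\<Sum>i\<in>B. f i)"
proof -
  have "cmod (qform B A v) \<le> (\<Sum>i\<in>B. \<Sum>j\<in>B. cmod (v i) * cmod (A i j) * cmod (v j))"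
    unfolding qform_def
    by (rule order.trans[OF norm_sum sum_mono], rule order.trans[OF norm_sum sum_mono]) (simp add: norm_mult)
  also have "\<dots> \<le> (\<Sum>i\<in>B. \<Sum>j\<in>B. cmod (A i j) * f i + cmod (A i j) * f j)"
    using split by (intro sum_mono) (simp add: algebra_simps)
  also have "\<dots> = (\<Sum>i\<in>B. f i * (\<Sum>j\<in>B. cmod (A i j))) + (\<Sum>j\<in>B. f j * (\<Sum>i\<in>B. cmod (A i j)))"
    by (simp add: sum.distrib sum_distrib_left mult.commute) (rule sum.swap)
  also have "\<dots> \<le> (\<Sum>i\<in>B. f i * s) + (\<Sum>j\<in>B. f j * s)"
    using A f unfolding schur_bounded_def by (intro add_mono sum_mono mult_left_mono) auto
  also have "\<dots> = 2 * s * (\<Sum>i\<in>B. f i)" by (simp add: sum_distrib_right[symmetric])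
  finally show ?thesis .
qed

lemma mult_le_weighted_squares:
  fixes x y d :: real assumes "d > 0" shows "x * y \<le> (d * y\<^sup>2 + x\<^sup>2 / d) / 2"
proof -
  have "0 \<le> (d * y - x)\<^sup>2 / d" using assms by simp
  also have "(d * y - x)\<^sup>2 / d = d * y\<^sup>2 - 2 * x * y + x\<^sup>2 / d"
    using assms by (simp add: power2_eq_square field_simps)
  finally show ?thesis by simp
qed

lemma qform_schur_bound:
  assumes "finite B" "schur_bounded B A s"
  shows "cmod (qform B A v) \<le> s * sqnorm B v"
proof -
  have "cmod (qform B A v) \<le> 2 * s * (\<Sum>i\<in>B. (cmod (v i))\<^sup>2 / 2)"
  proof (rule qform_le_split_bound[OF assms])
    fix i j
    have "cmod (v i) * cmod (v j) \<le> (cmod (v i))\<^sup>2 / 2 + (cmod (v j))\<^sup>2 / 2"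
      using mult_le_weighted_squares[of 1 "cmod (v i)" "cmod (v j)"] by simp
    then have "cmod (A i j) * (cmod (v i) * cmod (v j)) \<le> cmod (A i j) * ((cmod (v i))\<^sup>2 / 2 + (cmod (v j))\<^sup>2 / 2)"
      by (rule mult_left_mono) simp
    then show "cmod (v i) * cmod (A i j) * cmod (v j) \<le> cmod (A i j) * ((cmod (v i))\<^sup>2 / 2 + (cmod (v j))\<^sup>2 / 2)"
      by (simp add: mult_ac)
  qed simp
  then show ?thesis by (simp add: sqnorm_def sum_divide_distrib[symmetric])
qed

lemma qform_schur_weighted_bound:
  assumes fin: "finite B" and A: "schur_bounded B A 1" and \<delta>: "\<delta> > 0"
    and \<kappa>: "\<And>i. i \<in> B \<Longrightarrow> 0 \<le> \<kappa> i \<and> \<kappa> i \<le> 1"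
    and supp: "\<And>i j. i \<in> B \<Longrightarrow> j \<in> B \<Longrightarrow> A i j \<noteq> 0 \<Longrightarrow> \<kappa> i + \<kappa> j \<ge> 1"
  shows "cmod (qform B A v) \<le> \<delta> * sqnorm B v + (\<Sum>i\<in>B. \<kappa> i * (cmod (v i))\<^sup>2) / \<delta>"
proof -
  define f where "f i = (\<delta> * (cmod (v i))\<^sup>2 + \<kappa> i * (cmod (v i))\<^sup>2 / \<delta>) / 2" for i
  have "cmod (qform B A v) \<le> 2 * 1 * (\<Sum>i\<in>B. f i)"
  proof (rule qform_le_split_bound[OF fin A])
    fix i j assume i: "i \<in> B" and j: "j \<in> B"
    show "cmod (v i) * cmod (A i j) * cmod (v j) \<le> cmod (A i j) * (f i + f j)"
    proof (cases "A i j = 0")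
      case False
      define x y where "x = cmod (v i)" and "y = cmod (v j)"
      have ki: "0 \<le> \<kappa> i" "\<kappa> i \<le> 1" and kj: "0 \<le> \<kappa> j" "\<kappa> j \<le> 1" using \<kappa> i j by auto
      have "x * y \<le> \<kappa> i * (x * y) + \<kappa> j * (y * x)"
        using supp[OF i j False] mult_right_mono[of 1 "\<kappa> i + \<kappa> j" "x * y"]
        by (simp add: x_def y_def algebra_simps)
      also have "\<dots> \<le> \<kappa> i * ((\<delta> * y\<^sup>2 + x\<^sup>2 / \<delta>) / 2) + \<kappa> j * ((\<delta> * x\<^sup>2 + y\<^sup>2 / \<delta>) / 2)"
        using mult_le_weighted_squares[OF \<delta>] ki kj by (intro add_mono mult_left_mono) auto
      also have "\<dots> = (\<kappa> i * (\<delta> * y\<^sup>2) + \<kappa> j * (\<delta> * x\<^sup>2)) / 2 + (\<kappa> i * x\<^sup>2 / \<delta> + \<kappa> j * y\<^sup>2 / \<delta>) / 2"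
        by (simp add: algebra_simps add_divide_distrib)
      also have "\<dots> \<le> (\<delta> * y\<^sup>2 + \<delta> * x\<^sup>2) / 2 + (\<kappa> i * x\<^sup>2 / \<delta> + \<kappa> j * y\<^sup>2 / \<delta>) / 2"
      proof -
        have "\<kappa> i * (\<delta> * y\<^sup>2) \<le> \<delta> * y\<^sup>2" "\<kappa> j * (\<delta> * x\<^sup>2) \<le> \<delta> * x\<^sup>2"
          using ki kj \<delta> by (simp_all add: mult_left_le_one_le)
        then show ?thesis by (intro add_right_mono divide_right_mono add_mono) simp_all
      qed
      also have "\<dots> = f i + f j" by (simp add: f_def x_def y_def algebra_simps add_divide_distrib)
      finally have "cmod (A i j) * (x * y) \<le> cmod (A i j) * (f i + f j)"
        by (rule mult_left_mono) simp
      then show ?thesis unfolding x_def y_def by (simp add: mult_ac)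
    qed simp
  next
    fix i assume "i \<in> B"
    then show "0 \<le> f i" using \<kappa> \<delta> unfolding f_def by (simp add: add_nonneg_nonneg)
  qed
  also have "2 * 1 * (\<Sum>i\<in>B. f i) = \<delta> * sqnorm B v + (\<Sum>i\<in>B. \<kappa> i * (cmod (v i))\<^sup>2) / \<delta>"
    unfolding f_def sqnorm_def by (simp add: sum.distrib flip: sum_divide_distrib sum_distrib_left)
  finally show ?thesis .
qed

lemma finite_sites[simp]: "finite (sites L d)"
  by (simp add: sites_def)

lemma card_sites[simp]: "card (sites L d) = L ^ d"
  by (simp add: sites_def)

lemma sites_eq_if_coords_eq:
  assumes L: "L > 0"
  shows "y < L ^ d \<Longrightarrow> y' < L ^ d \<Longrightarrow> (\<forall>i<d. coord L y i = coord L y' i) \<Longrightarrow> y = y'"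
proof (induction d arbitrary: y y')
  case (Suc d)
  have "y div L < L ^ d" "y' div L < L ^ d"
    using Suc.prems(1,2) L by (simp_all add: less_mult_imp_div_less mult.commute)
  moreover have "\<forall>i<d. coord L (y div L) i = coord L (y' div L) i"
    using Suc.prems(3) by (auto simp: coord_def div_mult2_eq)
  ultimately have "y div L = y' div L" using Suc.IH by blast
  moreover have "y mod L = y' mod L" using Suc.prems(3)[rule_format, of 0] by (simp add: coord_def)
  ultimately show ?case by (metis div_mult_mod_eq)
qed simp

lemma card_Ex_unique_le:
  assumes "\<And>i y y'. i < d \<Longrightarrow> P i y \<Longrightarrow> P i y' \<Longrightarrow> y = y'"
  shows "card {y. \<exists>i<d. P i y} \<le> d"
proof -
  have "{y. \<exists>i<d. P i y} \<subseteq> (\<lambda>i. THE y. P i y) ` {..<d}"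
  proof
    fix y assume "y \<in> {y. \<exists>i<d. P i y}"
    then obtain i where i: "i < d" "P i y" by blast
    then have "(THE y. P i y) = y" using assms by (intro the_equality) auto
    then show "y \<in> (\<lambda>i. THE y. P i y) ` {..<d}" using i(1) by force
  qed
  then have "card {y. \<exists>i<d. P i y} \<le> card ((\<lambda>i. THE y. P i y) ` {..<d})" by (intro card_mono) auto
  also have "\<dots> \<le> d" using card_image_le[of "{..<d}"] by simp
  finally show ?thesis .
qed

lemma card_neighbours_le:
  assumes L: "L > 0"
  shows "card {y \<in> sites L d. nbr L d x y \<or> nbr L d y x} \<le> 2 * d"
proof -
  define F where "F i y \<longleftrightarrow> y \<in> sites L d \<and> coord L y i = (coord L x i + 1) mod L \<and>
                    (\<forall>j<d. j \<noteq> i \<longrightarrow> coord L y j = coord L x j)" for i y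
  define G where "G i y \<longleftrightarrow> y \<in> sites L d \<and> coord L x i = (coord L y i + 1) mod L \<and>
                    (\<forall>j<d. j \<noteq> i \<longrightarrow> coord L x j = coord L y j)" for i y
  have coord_lt: "coord L z i < L" for z i using L by (simp add: coord_def)
  have succ_inj: "a = b" if "(a + 1) mod L = (b + 1) mod L" "a < L" "b < L" for a b
    using that by (metis Suc_eq_plus1 Suc_leI le_neq_implies_less mod_less mod_self nat.inject
        old.nat.distinct(2) zero_less_Suc)
  have "card {y. \<exists>i<d. F i y} \<le> d"
  proof (rule card_Ex_unique_le)
    fix i y y' assume "i < d" "F i y" "F i y'"
    then show "y = y'" unfolding F_def sites_def
      by (intro sites_eq_if_coords_eq[OF L, where d = d]) (auto, metis)
  qed
  moreover have "card {y. \<exists>i<d. G i y} \<le> d"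
  proof (rule card_Ex_unique_le)
    fix i y y' assume "i < d" "G i y" "G i y'"
    then have "coord L y i = coord L y' i" unfolding G_def using succ_inj coord_lt by metis
    show "y = y'"
    proof (rule sites_eq_if_coords_eq[OF L, where d = d])
      show "y < L ^ d" "y' < L ^ d" using \<open>G i y\<close> \<open>G i y'\<close> by (simp_all add: G_def sites_def)
      show "\<forall>j<d. coord L y j = coord L y' j"
        using \<open>coord L y i = coord L y' i\<close> \<open>G i y\<close> \<open>G i y'\<close> unfolding G_def by metis
    qed
  qed
  moreover have "{y \<in> sites L d. nbr L d x y \<or> nbr L d y x} = {y. \<exists>i<d. F i y} \<union> {y. \<exists>i<d. G i y}"
    unfolding nbr_def F_def G_def by blast
  ultimately show ?thesis using card_Un_le[of "{y. \<exists>i<d. F i y}" "{y. \<exists>i<d. G i y}"] by simp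
qed

lemma finite_bonds: "finite (bonds L d)"
proof -
  have "bonds L d \<subseteq> (\<lambda>(x, y). {x, y}) ` (sites L d \<times> sites L d)"
    unfolding bonds_def by blast
  then show ?thesis by (rule finite_subset) simp
qed

lemma bond_pairs_subset:
  assumes "b \<in> bonds L d" shows "bond_pairs b \<subseteq> sites L d \<times> sites L d"
proof -
  obtain x y where "b = {x, y}" "x \<in> sites L d" "y \<in> sites L d"
    using assms unfolding bonds_def by blast
  then show ?thesis unfolding bond_pairs_def by blast
qed

lemma finite_bond_pairs: "b \<in> bonds L d \<Longrightarrow> finite (bond_pairs b)"
  using finite_subset[OF bond_pairs_subset] by simp

lemma bond_pairs_disjoint:
  assumes "b1 \<in> bonds L d" "b2 \<in> bonds L d" "b1 \<noteq> b2"
  shows "bond_pairs b1 \<inter> bond_pairs b2 = {}"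
proof -
  have pair: "b = {x, y}" if "b \<in> bonds L d" "(x, y) \<in> bond_pairs b" for b x y
    using that unfolding bonds_def bond_pairs_def by blast
  show ?thesis
  proof (rule ccontr)
    assume "bond_pairs b1 \<inter> bond_pairs b2 \<noteq> {}"
    then obtain x y where "(x, y) \<in> bond_pairs b1" "(x, y) \<in> bond_pairs b2" by auto
    then have "b1 = {x, y}" "b2 = {x, y}" using pair assms(1,2) by blast+
    with assms(3) show False by simp
  qed
qed

lemma bond_pair_neighbours:
  assumes "b \<in> bonds L d" "(x, y) \<in> bond_pairs b"
  shows "x \<in> sites L d \<and> y \<in> sites L d \<and> x \<noteq> y \<and> (nbr L d x y \<or> nbr L d y x)"
proof -
  obtain x' y' where "b = {x', y'}" "x' \<in> sites L d" "y' \<in> sites L d" "nbr L d x' y'"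
    using assms(1) unfolding bonds_def by blast
  with assms(2) show ?thesis unfolding bond_pairs_def by blast
qed

lemma bond_pairs_sum_swap:
  "(\<Sum>(x, y)\<in>bond_pairs b. f x y) = (\<Sum>(x, y)\<in>bond_pairs b. f y x)"
  by (rule sum.reindex_bij_witness[of _ prod.swap prod.swap]) (auto simp: bond_pairs_def)

text \<open>Each site lies in at most \<open>2 d\<close> ordered bonds as first entry.\<close>
lemma bond_pairs_sum_le:
  fixes g :: "nat \<Rightarrow> real"
  assumes L: "L > 0" and g: "\<And>x. x \<in> sites L d \<Longrightarrow> g x \<ge> 0"
  shows "(\<Sum>b\<in>bonds L d. \<Sum>(x, y)\<in>bond_pairs b. g x) \<le> 2 * real d * (\<Sum>x\<in>sites L d. g x)"
proof -
  define nb where "nb x = {y \<in> sites L d. nbr L d x y \<or> nbr L d y x}" for x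
  have "(\<Sum>b\<in>bonds L d. \<Sum>(x, y)\<in>bond_pairs b. g x) = (\<Sum>(x, y)\<in>(\<Union>b\<in>bonds L d. bond_pairs b). g x)"
    by (rule sum.UNION_disjoint[symmetric]) (auto simp: finite_bonds finite_bond_pairs bond_pairs_disjoint)
  also have "\<dots> \<le> (\<Sum>(x, y)\<in>Sigma (sites L d) nb. g x)"
    using bond_pair_neighbours g by (intro sum_mono2) (auto simp: nb_def)
  also have "\<dots> = (\<Sum>x\<in>sites L d. real (card (nb x)) * g x)"
    by (subst sum.Sigma[symmetric]) (auto simp: nb_def)
  also have "\<dots> \<le> (\<Sum>x\<in>sites L d. 2 * d * g x)"
    using g card_neighbours_le[OF L] unfolding nb_def
    by (intro sum_mono mult_right_mono) (auto simp flip: of_nat_mult)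
  finally show ?thesis by (simp add: sum_distrib_left)
qed

lemma norm_bond_sum_le:
  assumes L: "L > 0"
    and F: "\<And>b x y. b \<in> bonds L d \<Longrightarrow> (x, y) \<in> bond_pairs b \<Longrightarrow> cmod (F x y) \<le> g x"
    and g: "\<And>x. x \<in> sites L d \<Longrightarrow> g x \<ge> 0"
  shows "cmod (\<Sum>b\<in>bonds L d. \<Sum>(x, y)\<in>bond_pairs b. F x y) \<le> 2 * real d * (\<Sum>x\<in>sites L d. g x)"
proof -
  have "cmod (\<Sum>b\<in>bonds L d. \<Sum>(x, y)\<in>bond_pairs b. F x y) \<le> (\<Sum>b\<in>bonds L d. \<Sum>(x, y)\<in>bond_pairs b. g x)"
    using F by (intro order.trans[OF norm_sum sum_mono] order.trans[OF norm_sum sum_mono]) auto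
  also have "\<dots> \<le> 2 * real d * (\<Sum>x\<in>sites L d. g x)" by (rule bond_pairs_sum_le[OF L g])
  finally show ?thesis .
qed

definition stag :: "nat \<Rightarrow> nat \<Rightarrow> nat \<Rightarrow> real" where
  "stag L d x = (-1) ^ (\<Sum>i<d. coord L x i)"

lemma eta_stag: "eta L d x = complex_of_real (stag L d x)"
  by (simp add: eta_def stag_def)

lemma stag_cases: "stag L d x = 1 \<or> stag L d x = -1"
  unfolding stag_def by (metis neg_one_even_power neg_one_odd_power)

lemma abs_stag[simp]: "\<bar>stag L d x\<bar> = 1"
  using stag_cases[of L d x] by auto

lemma stag_square[simp]: "stag L d x * stag L d x = 1"
  using stag_cases[of L d x] by auto

lemma abs_staggered_sum_le:
  assumes "\<And>x. x \<in> sites L d \<Longrightarrow> \<bar>f x\<bar> \<le> 1 / 2"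
  shows "\<bar>\<Sum>x\<in>sites L d. stag L d x * f x\<bar> \<le> real (L ^ d) / 2"
proof -
  have "\<bar>\<Sum>x\<in>sites L d. stag L d x * f x\<bar> \<le> (\<Sum>x\<in>sites L d. 1 / 2)"
    using assms by (intro order.trans[OF sum_abs sum_mono]) (simp add: abs_mult)
  then show ?thesis by simp
qed

lemma staggered_sum_neel: "(\<Sum>x\<in>sites L d. stag L d x * (stag L d x / 2)) = real (L ^ d) / 2"
proof -
  have "(\<Sum>x\<in>sites L d. stag L d x * (stag L d x / 2)) = (\<Sum>x\<in>sites L d. 1 / 2)"
    by (intro sum.cong) simp_all
  then show ?thesis by simp
qed

lemma finite_spin_basis[simp]: "finite (spin_basis L d)"
  by (simp add: spin_basis_def)

lemma card_spin_basis: "card (spin_basis L d) = 2 ^ (L ^ d)"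
  by (simp add: spin_basis_def card_Pow)

definition flip :: "nat \<Rightarrow> nat set \<Rightarrow> nat set" where
  "flip x A = (if x \<in> A then A - {x} else insert x A)"

lemma schur_bounded_S1: "schur_bounded (spin_basis L d) (S1 x) (1 / 2)"
  by (rule schur_bounded_sparse[where p = "flip x" and q = "flip x"])
    (auto simp: S1_def flip_def split: if_splits)

lemma schur_bounded_S2: "schur_bounded (spin_basis L d) (S2 x) (1 / 2)"
  by (rule schur_bounded_sparse[where p = "flip x" and q = "flip x"])
    (auto simp: S2_def flip_def split: if_splits)

lemma schur_bounded_S3: "schur_bounded (spin_basis L d) (S3 x) (1 / 2)"
  by (rule schur_bounded_sparse[where p = id and q = id]) (auto simp: S3_def split: if_splits)

lemma S1_herm: "cnj (S1 x A A') = S1 x A' A"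
  and S2_herm: "cnj (S2 x A A') = S2 x A' A"
  and S3_herm: "cnj (S3 x A A') = S3 x A' A"
  by (auto simp: S1_def S2_def S3_def)

definition bond_op :: "nat \<Rightarrow> nat \<Rightarrow> nat \<Rightarrow> nat \<Rightarrow> nat set op" where
  "bond_op L d x y = (\<lambda>i j. SdotS L d x y i j - (1 / 4) * opid i j)"

lemma schur_bounded_bond_op: "schur_bounded (spin_basis L d) (bond_op L d x y) 1"
proof -
  let ?B = "spin_basis L d"
  have "schur_bounded ?B (SdotS L d x y) (1/2 * (1/2) + 1/2 * (1/2) + 1/2 * (1/2))"
    unfolding SdotS_def
    by (intro schur_bounded_add schur_bounded_opmul schur_bounded_S1 schur_bounded_S2 schur_bounded_S3) auto
  moreover have "schur_bounded ?B (\<lambda>i j. (1/4) * opid i j) (cmod (1/4) * 1)"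
    by (intro schur_bounded_scale schur_bounded_opid finite_spin_basis)
  ultimately show ?thesis
    unfolding bond_op_def by (rule schur_bounded_mono[OF schur_bounded_diff]) simp
qed

lemma bond_op_herm: "cnj (bond_op L d x y j i) = bond_op L d y x i j"
proof -
  have "cnj (opmul B (S x) (S y) j i) = opmul B (S y) (S x) i j"
    if "\<And>x A A'. cnj (S x A A') = S x A' A" for B and S :: "nat \<Rightarrow> nat set op"
    unfolding opmul_def cnj_sum using that by (simp add: mult.commute)
  from this[of S1, OF S1_herm] this[of S2, OF S2_herm] this[of S3, OF S3_herm] show ?thesis
    unfolding bond_op_def SdotS_def by (simp add: opid_def)
qed

definition spin_stag :: "nat \<Rightarrow> nat \<Rightarrow> nat set \<Rightarrow> real" where
  "spin_stag L d A = (\<Sum>x\<in>sites L d. stag L d x * (if x \<in> A then 1 / 2 else - 1 / 2))"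

lemma Mspin_diagonal: "Mspin L d A' A = (if A' = A then complex_of_real (spin_stag L d A) else 0)"
  unfolding Mspin_def spin_stag_def S3_def by (auto simp: eta_stag intro!: sum.cong)

lemma H_Heis_bond_op:
  "H_Heis J h L d = (\<lambda>i j. complex_of_real J * (\<Sum>b\<in>bonds L d. (1/2) * (\<Sum>(x, y)\<in>bond_pairs b. bond_op L d x y i j))
     - complex_of_real h * Mspin L d i j)"
  unfolding H_Heis_def bond_op_def by simp

lemma hermitian_H_Heis: "hermitian_op B (H_Heis J h L d)"
proof -
  have "cnj (H_Heis J h L d j i) = H_Heis J h L d i j" for i j
  proof -
    have "cnj (H_Heis J h L d j i) = complex_of_real J * (\<Sum>b\<in>bonds L d. (1/2) * (\<Sum>(x, y)\<in>bond_pairs b. bond_op L d y x i j))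
       - complex_of_real h * Mspin L d i j"
      unfolding H_Heis_bond_op cnj_sum by (simp add: case_prod_beta bond_op_herm Mspin_diagonal)
    also have "\<dots> = H_Heis J h L d i j"
      unfolding H_Heis_bond_op by (subst bond_pairs_sum_swap) simp
    finally show ?thesis .
  qed
  then show ?thesis unfolding hermitian_op_def by metis
qed

lemma qform_H_Heis:
  "qform B (H_Heis J h L d) v = complex_of_real J * (\<Sum>b\<in>bonds L d. (1/2) * (\<Sum>(x, y)\<in>bond_pairs b. qform B (bond_op L d x y) v))
     - complex_of_real h * qform B (Mspin L d) v"
  unfolding H_Heis_bond_op qform_diff qform_scale qform_sum case_prod_beta by simp

text \<open>Every bond energy \<open>\<^bold>S\<^sub>x \<cdot> \<^bold>S\<^sub>y - 1/4\<close> lies in \<open>[-1, 1]\<close> and each site has at most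
  \<open>2 d\<close> bonds, so the exchange term moves the energy by at most \<open>J d |\<Lambda>|\<close>.\<close>
lemma norm_exchange_le:
  assumes L: "L > 0" and v: "sqnorm (spin_basis L d) v = 1"
  shows "cmod (\<Sum>b\<in>bonds L d. (1/2) * (\<Sum>(x, y)\<in>bond_pairs b. qform (spin_basis L d) (bond_op L d x y) v))
         \<le> d * real (L ^ d)"
proof -
  have "cmod (\<Sum>b\<in>bonds L d. \<Sum>(x, y)\<in>bond_pairs b. qform (spin_basis L d) (bond_op L d x y) v)
      \<le> 2 * real d * (\<Sum>x\<in>sites L d. 1)"
  proof (rule norm_bond_sum_le[OF L])
    show "cmod (qform (spin_basis L d) (bond_op L d x y) v) \<le> 1" for x y
      using qform_schur_bound[OF finite_spin_basis[of L d] schur_bounded_bond_op[of L d x y], where v = v] v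
      by simp
  qed simp
  then show ?thesis unfolding sum_distrib_left[symmetric] norm_mult by simp
qed

lemma heisenberg_magnetization_deficit:
  assumes L: "L > 0" and J: "J \<ge> 0" and h: "h > 0" and \<beta>: "\<beta> > 0" and a: "a > 0"
  shows "\<exists>g. gibbs (spin_basis L d) (H_Heis J h L d) \<beta> (Mspin L d) = complex_of_real g \<and>
             g \<le> real (L ^ d) / 2 \<and>
             real (L ^ d) / 2 - g \<le> (2 * (J * (d * real (L ^ d))) + a) / h
                                    + 2 * (real (L ^ d) / 2) * 2 ^ (L ^ d) * exp (- \<beta> * a)"
proof -
  define B where "B = spin_basis L d"
  define N where "N = real (L ^ d)"
  define neel where "neel = {x \<in> sites L d. stag L d x = 1}"
  define w where "w A = (if A = neel then 1 else 0 :: complex)" for A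
  have fin: "finite B" and neel: "neel \<in> B" unfolding neel_def B_def spin_basis_def by auto
  have obs: "qform B (Mspin L d) v \<in> complex_of_real ` {- (N / 2)..N / 2}" if "sqnorm B v = 1" for v
  proof (rule qform_diagonal_range[OF fin _ _ that])
    show "Mspin L d A' A = (if A' = A then complex_of_real (spin_stag L d A') else 0)" for A' A
      by (simp add: Mspin_diagonal)
    have abs_stag: "\<bar>spin_stag L d A\<bar> \<le> N / 2" for A
      unfolding spin_stag_def N_def by (rule abs_staggered_sum_le) simp
    show "- (N / 2) \<le> spin_stag L d A \<and> spin_stag L d A \<le> N / 2" for A
      using abs_stag[of A] unfolding abs_le_iff by linarith
  qed
  define X where "X v = Re (\<Sum>b\<in>bonds L d. (1/2) * (\<Sum>(x, y)\<in>bond_pairs b. qform B (bond_op L d x y) v))" for v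
  have ReH: "Re (qform B (H_Heis J h L d) v) = J * X v - h * Re (qform B (Mspin L d) v)" for v
    unfolding qform_H_Heis X_def by simp
  have exchange: "J * (- (d * N)) \<le> J * X v \<and> J * X v \<le> J * (d * N)" if "sqnorm B v = 1" for v
  proof -
    have "\<bar>X v\<bar> \<le> d * N"
      using order.trans[OF abs_Re_le_cmod norm_exchange_le[OF L that[unfolded B_def]]]
      unfolding B_def N_def X_def .
    then have "- (d * N) \<le> X v" "X v \<le> d * N" by (simp_all add: abs_le_iff)
    then show ?thesis using mult_left_mono J by blast
  qed
  have lower: "- h * Re (qform B (Mspin L d) v) - J * (d * N) \<le> Re (qform B (H_Heis J h L d) v)"
    if "sqnorm B v = 1" for v
    using exchange[OF that] unfolding ReH by simp
  have neel_stag: "spin_stag L d neel = N / 2"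
    unfolding spin_stag_def N_def staggered_sum_neel[symmetric]
    by (intro sum.cong) (use stag_cases in \<open>auto simp: neel_def\<close>)
  have "qform B (Mspin L d) w = complex_of_real (N / 2)"
    unfolding w_def qform_basis_vector[OF fin neel] by (simp only: Mspin_diagonal neel_stag simp_thms if_True)
  then have trial: "Re (qform B (H_Heis J h L d) w) \<le> J * (d * N) - h * (N / 2)"
    using exchange[OF sqnorm_basis_vector[OF fin neel, folded w_def]] unfolding ReH by (simp only: Re_complex_of_real) linarith
  obtain g where "gibbs B (H_Heis J h L d) \<beta> (Mspin L d) = complex_of_real g" "g \<le> N / 2"
    "N / 2 - g \<le> (2 * (J * (d * N)) + a) / h + 2 * (N / 2) * card B * exp (- \<beta> * a)"
    using gibbs_near_max[OF fin hermitian_H_Heis obs lower sqnorm_basis_vector[OF fin neel, folded w_def] trial \<beta> h a]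
    by blast
  then show ?thesis unfolding B_def N_def card_spin_basis by auto
qed

lemma finite_fock_basis[simp]: "finite (fock_basis L d)"
  by (simp add: fock_basis_def)

lemma finite_hf_basis[simp]: "finite (hf_basis L d)"
  by (simp add: hf_basis_def)

lemma hf_basis_fock: "S \<in> hf_basis L d \<Longrightarrow> S \<in> fock_basis L d"
  by (simp add: hf_basis_def)

lemma card_hf_basis_le: "card (hf_basis L d) \<le> 4 ^ (L ^ d)"
proof -
  have "card (hf_basis L d) \<le> card (fock_basis L d)"
    unfolding hf_basis_def by (intro card_mono) auto
  also have "\<dots> = 4 ^ (L ^ d)" by (simp add: fock_basis_def card_Pow power_mult)
  finally show ?thesis .
qed

lemma Diff_in_fock_basis: "S \<in> fock_basis L d \<Longrightarrow> S - {m} \<in> fock_basis L d"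
  by (auto simp: fock_basis_def)

lemma mode_eq_iff: "mode x \<sigma> = mode y \<tau> \<longleftrightarrow> x = y \<and> \<sigma> = \<tau>"
  unfolding mode_def by (cases \<sigma>; cases \<tau>; auto; presburger)

lemma opmul_single_column:
  assumes "finite F" and "\<And>k. C k j \<noteq> 0 \<Longrightarrow> k = p"
  shows "opmul F A C i j = (if p \<in> F then A i p * C p j else 0)"
proof -
  have "opmul F A C i j = (\<Sum>k\<in>F. if k = p then A i k * C k j else 0)"
    unfolding opmul_def using assms(2) by (intro sum.cong) auto
  then show ?thesis using assms(1) by simp
qed

lemma ann_nonzero: "ann m k S \<noteq> 0 \<Longrightarrow> m \<in> S \<and> k = S - {m}"
  unfolding ann_def by (auto split: if_splits)

lemma norm_ann_le: "cmod (ann m k S) \<le> 1"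
  unfolding ann_def by (auto simp: norm_power)

lemma numop_apply:
  assumes S: "S \<in> fock_basis L d"
  shows "numop L d x \<sigma> S' S = (if S' = S \<and> mode x \<sigma> \<in> S then 1 else 0)"
proof -
  let ?m = "mode x \<sigma>"
  have "numop L d x \<sigma> S' S = cnj (ann ?m (S - {?m}) S') * ann ?m (S - {?m}) S"
    unfolding numop_def cre_def using Diff_in_fock_basis[OF S]
    by (subst opmul_single_column[where p = "S - {?m}"]) (auto dest: ann_nonzero)
  also have "\<dots> = (if S' = S \<and> ?m \<in> S then 1 else 0)"
  proof (cases "?m \<in> S \<and> ?m \<in> S' \<and> S - {?m} = S' - {?m}")
    case True
    then have "S' = S" by (metis insert_Diff)
    with True show ?thesis by (simp add: ann_def power_mult_distrib[symmetric])
  next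
    case False
    then show ?thesis by (auto simp: ann_def)
  qed
  finally show ?thesis .
qed

definition hop :: "nat \<Rightarrow> nat \<Rightarrow> nat \<Rightarrow> nat \<Rightarrow> bool \<Rightarrow> nat set op" where
  "hop L d x y \<sigma> = opmul (fock_basis L d) (cre (mode x \<sigma>)) (ann (mode y \<sigma>))"

lemma hop_apply:
  assumes S: "S \<in> fock_basis L d"
  shows "hop L d x y \<sigma> S' S = cnj (ann (mode x \<sigma>) (S - {mode y \<sigma>}) S') * ann (mode y \<sigma>) (S - {mode y \<sigma>}) S"
  unfolding hop_def cre_def using Diff_in_fock_basis[OF S]
  by (subst opmul_single_column[where p = "S - {mode y \<sigma>}"]) (auto dest: ann_nonzero)

lemma norm_hop_le: "S \<in> fock_basis L d \<Longrightarrow> cmod (hop L d x y \<sigma> S' S) \<le> 1"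
  unfolding hop_apply norm_mult complex_mod_cnj by (intro mult_le_one norm_ann_le) simp_all

lemma hop_nonzero:
  assumes S: "S \<in> fock_basis L d" and nz: "hop L d x y \<sigma> S' S \<noteq> 0"
  shows "mode y \<sigma> \<in> S \<and> mode x \<sigma> \<in> S' \<and> S' - {mode x \<sigma>} = S - {mode y \<sigma>}"
  using nz unfolding hop_apply[OF S] ann_def by (auto split: if_splits)

lemma hop_herm: "cnj (hop L d x y \<sigma> S S') = hop L d y x \<sigma> S' S"
  unfolding hop_def opmul_def cre_def cnj_sum by (simp add: mult.commute)

lemma schur_bounded_hop: "schur_bounded (hf_basis L d) (hop L d x y \<sigma>) 1"
proof (rule schur_bounded_sparse[where p = "\<lambda>S'. insert (mode y \<sigma>) (S' - {mode x \<sigma>})"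
                                     and q = "\<lambda>S. insert (mode x \<sigma>) (S - {mode y \<sigma>})"])
  fix S' S assume "S' \<in> hf_basis L d" "S \<in> hf_basis L d" "hop L d x y \<sigma> S' S \<noteq> 0"
  then show "S = insert (mode y \<sigma>) (S' - {mode x \<sigma>}) \<and> S' = insert (mode x \<sigma>) (S - {mode y \<sigma>})"
    using hop_nonzero[OF hf_basis_fock] by (metis insert_Diff)
qed (auto simp: norm_hop_le hf_basis_fock)

lemma Top_eq_hop_sum:
  "Top t L d = (\<lambda>i j. - complex_of_real t *
      (\<Sum>b\<in>bonds L d. \<Sum>(x, y)\<in>bond_pairs b. \<Sum>\<sigma>\<in>UNIV. hop L d x y \<sigma> i j))"
  unfolding Top_def hop_def by simp

definition doubly_occupied :: "nat \<Rightarrow> nat \<Rightarrow> nat set \<Rightarrow> real" where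
  "doubly_occupied L d S = (\<Sum>x\<in>sites L d. if mode x True \<in> S \<and> mode x False \<in> S then 1 else 0)"

definition nonsingle :: "nat \<Rightarrow> nat set \<Rightarrow> real" where
  "nonsingle x S = (if (mode x True \<in> S) = (mode x False \<in> S) then 1 else 0)"

definition fock_stag :: "nat \<Rightarrow> nat \<Rightarrow> nat set \<Rightarrow> real" where
  "fock_stag L d S = (\<Sum>x\<in>sites L d. stag L d x *
      ((if mode x True \<in> S then 1 / 2 else 0) - (if mode x False \<in> S then 1 / 2 else 0)))"

lemma Dop_diagonal:
  assumes S: "S \<in> fock_basis L d"
  shows "Dop L d S' S = (if S' = S then complex_of_real (doubly_occupied L d S) else 0)"
proof -
  have "opmul (fock_basis L d) (numop L d x True) (numop L d x False) S' S =
        (if S' = S \<and> mode x True \<in> S \<and> mode x False \<in> S then 1 else 0)" for x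
    using S by (subst opmul_single_column[where p = S]) (auto simp: numop_apply split: if_splits)
  then show ?thesis unfolding Dop_def doubly_occupied_def by (auto intro!: sum.cong)
qed

lemma Mop_diagonal:
  assumes S: "S \<in> fock_basis L d"
  shows "Mop L d S' S = (if S' = S then complex_of_real (fock_stag L d S) else 0)"
  unfolding Mop_def fock_stag_def using S by (auto simp: numop_apply eta_stag intro!: sum.cong)

lemma sum_lessThan_double: "(\<Sum>m<2 * n. f m) = (\<Sum>x<n. f (2 * x) + (f (2 * x + 1) :: real))" for n :: nat
  by (induction n) (auto simp: sum.distrib)

text \<open>At half filling the number of empty sites equals the number of doubly occupied ones,
  so the sites that are not singly occupied number twice the doubly occupied ones.\<close>
lemma sum_nonsingle_half_filled:
  assumes S: "S \<in> hf_basis L d"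
  shows "(\<Sum>x\<in>sites L d. nonsingle x S) = 2 * doubly_occupied L d S"
proof -
  define occ where "occ x = (if mode x True \<in> S then 1 else 0) + (if mode x False \<in> S then 1 else 0 :: real)" for x
  have sub: "S \<subseteq> {..<2 * L ^ d}" and c: "card S = L ^ d"
    using S by (auto simp: hf_basis_def fock_basis_def)
  have "real (card S) = (\<Sum>m<2 * L ^ d. if m \<in> S then 1 else 0)"
    using sub by (simp add: sum.If_cases Int_absorb1)
  also have "\<dots> = (\<Sum>x\<in>sites L d. occ x)"
    by (simp add: sum_lessThan_double occ_def mode_def sites_def atLeast0LessThan)
  finally have "(\<Sum>x\<in>sites L d. 1 - occ x) = 0" using c by (simp add: sum_subtractf)
  moreover have "(\<Sum>x\<in>sites L d. nonsingle x S) - 2 * doubly_occupied L d S = (\<Sum>x\<in>sites L d. 1 - occ x)"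
    unfolding doubly_occupied_def sum_distrib_left sum_subtractf[symmetric]
    by (intro sum.cong) (auto simp: nonsingle_def occ_def)
  ultimately show ?thesis by simp
qed

lemma nonsingle_bounds: "0 \<le> nonsingle x S \<and> nonsingle x S \<le> 1"
  unfolding nonsingle_def by auto

lemma nonsingle_hop:
  assumes S: "S \<in> fock_basis L d" and nz: "hop L d x y \<sigma> S' S \<noteq> 0" and xy: "x \<noteq> y"
  shows "nonsingle x S' + nonsingle x S \<ge> 1"
proof -
  let ?mx = "mode x \<sigma>" and ?my = "mode y \<sigma>" and ?m' = "mode x (\<not> \<sigma>)"
  have h: "?my \<in> S" "?mx \<in> S'" "S' - {?mx} = S - {?my}" using hop_nonzero[OF S nz] by auto
  have ne: "?mx \<noteq> ?my" "?m' \<noteq> ?mx" "?m' \<noteq> ?my" using xy by (auto simp: mode_eq_iff)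
  then have "?mx \<notin> S" "(?m' \<in> S) = (?m' \<in> S')" using h by blast+
  then have "nonsingle x S' = 1 \<or> nonsingle x S = 1"
    using h(2) unfolding nonsingle_def by (cases \<sigma>) auto
  then show ?thesis using nonsingle_bounds[of x S] nonsingle_bounds[of x S'] by linarith
qed

lemma hermitian_Top: "cnj (Top t L d j i) = Top t L d i j"
proof -
  have "cnj (Top t L d j i) = - complex_of_real t *
      (\<Sum>b\<in>bonds L d. \<Sum>(x, y)\<in>bond_pairs b. \<Sum>\<sigma>\<in>UNIV. hop L d y x \<sigma> i j)"
    unfolding Top_eq_hop_sum cnj_sum by (simp add: case_prod_beta hop_herm)
  also have "\<dots> = Top t L d i j"
    unfolding Top_eq_hop_sum by (subst bond_pairs_sum_swap) simp
  finally show ?thesis .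
qed

lemma hermitian_H_Hub: "hermitian_op (hf_basis L d) (H_Hub U t h L d)"
  unfolding hermitian_op_def H_Hub_def
  using hermitian_Top[of t L d] Dop_diagonal[OF hf_basis_fock] Mop_diagonal[OF hf_basis_fock]
  by (simp add: hermitian_Top)

lemma qform_H_Hub:
  "qform B (H_Hub U t h L d) v = complex_of_real U * qform B (Dop L d) v
     - complex_of_real t * (\<Sum>b\<in>bonds L d. \<Sum>(x, y)\<in>bond_pairs b. \<Sum>\<sigma>\<in>UNIV. qform B (hop L d x y \<sigma>) v)
     - complex_of_real h * qform B (Mop L d) v"
proof -
  have "H_Hub U t h L d = (\<lambda>i j. (complex_of_real U * Dop L d i j + Top t L d i j) - complex_of_real h * Mop L d i j)"
    unfolding H_Hub_def by simp
  moreover have "qform B (Top t L d) v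
      = - complex_of_real t * (\<Sum>b\<in>bonds L d. \<Sum>(x, y)\<in>bond_pairs b. \<Sum>\<sigma>\<in>UNIV. qform B (hop L d x y \<sigma>) v)"
    unfolding Top_eq_hop_sum qform_scale qform_sum case_prod_beta by simp
  ultimately show ?thesis by (simp add: qform_diff qform_add qform_scale)
qed

lemma qform_Dop:
  "qform (hf_basis L d) (Dop L d) v = complex_of_real (\<Sum>S\<in>hf_basis L d. doubly_occupied L d S * (cmod (v S))\<^sup>2)"
  by (rule qform_diagonal) (auto simp: Dop_diagonal hf_basis_fock)

lemma qform_hop_le:
  assumes xy: "x \<noteq> y" and \<delta>: "\<delta> > 0"
  shows "cmod (qform (hf_basis L d) (hop L d x y \<sigma>) v)
         \<le> \<delta> * sqnorm (hf_basis L d) v + (\<Sum>S\<in>hf_basis L d. nonsingle x S * (cmod (v S))\<^sup>2) / \<delta>"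
  by (rule qform_schur_weighted_bound[OF finite_hf_basis schur_bounded_hop \<delta>])
    (auto simp: nonsingle_bounds nonsingle_hop[OF hf_basis_fock _ xy])

text \<open>Hopping needs an empty or doubly occupied site, whose cost is paid by \<open>U D\<close>: choosing
  \<open>\<delta> = 8 d |t| / U\<close> in the weighted Schur test bounds the kinetic energy by
  \<open>U D + 32 d\<^sup>2 t\<^sup>2 |\<Lambda>| / U\<close>.\<close>
lemma hubbard_kinetic_le:
  assumes L: "L > 0" and U: "U > 0" and d: "d \<ge> 1" and t: "t \<noteq> 0"
    and v: "sqnorm (hf_basis L d) v = 1"
  shows "t * Re (\<Sum>b\<in>bonds L d. \<Sum>(x, y)\<in>bond_pairs b. \<Sum>\<sigma>\<in>UNIV. qform (hf_basis L d) (hop L d x y \<sigma>) v)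
         \<le> 32 * real d ^ 2 * t\<^sup>2 * real (L ^ d) / U + U * Re (qform (hf_basis L d) (Dop L d) v)"
proof -
  define B where "B = hf_basis L d"
  define N where "N = real (L ^ d)"
  define \<delta> where "\<delta> = 8 * d * \<bar>t\<bar> / U"
  have \<delta>: "\<delta> > 0" unfolding \<delta>_def using U d t by simp
  define D where "D = (\<Sum>S\<in>B. doubly_occupied L d S * (cmod (v S))\<^sup>2)"
  define Q where "Q x = (\<Sum>S\<in>B. nonsingle x S * (cmod (v S))\<^sup>2)" for x
  have Q: "Q x \<ge> 0" for x
    unfolding Q_def using nonsingle_bounds by (intro sum_nonneg mult_nonneg_nonneg) auto
  have sum_Q: "(\<Sum>x\<in>sites L d. Q x) = 2 * D"
  proof -
    have "(\<Sum>x\<in>sites L d. Q x) = (\<Sum>S\<in>B. (\<Sum>x\<in>sites L d. nonsingle x S) * (cmod (v S))\<^sup>2)"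
      unfolding Q_def by (subst sum.swap) (simp add: sum_distrib_right)
    also have "\<dots> = 2 * D"
      unfolding D_def B_def by (simp add: sum_nonsingle_half_filled sum_distrib_left mult.assoc cong: sum.cong)
    finally show ?thesis .
  qed
  define T where "T = (\<Sum>b\<in>bonds L d. \<Sum>(x, y)\<in>bond_pairs b. \<Sum>\<sigma>\<in>UNIV. qform B (hop L d x y \<sigma>) v)"
  have "cmod T \<le> 2 * real d * (\<Sum>x\<in>sites L d. 2 * (\<delta> + Q x / \<delta>))"
    unfolding T_def
  proof (rule norm_bond_sum_le[OF L])
    fix b x y assume "b \<in> bonds L d" "(x, y) \<in> bond_pairs b"
    then have "x \<noteq> y" using bond_pair_neighbours by blast
    then have each: "cmod (qform B (hop L d x y \<sigma>) v) \<le> \<delta> + Q x / \<delta>" for \<sigma>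
      using qform_hop_le[OF _ \<delta>, of x y L d \<sigma> v] v unfolding B_def Q_def by simp
    have "cmod (\<Sum>\<sigma>\<in>UNIV. qform B (hop L d x y \<sigma>) v) \<le> (\<Sum>\<sigma>\<in>UNIV. cmod (qform B (hop L d x y \<sigma>) v))"
      by (rule norm_sum)
    also have "\<dots> = cmod (qform B (hop L d x y False) v) + cmod (qform B (hop L d x y True) v)"
      by (simp add: UNIV_bool)
    also have "\<dots> \<le> 2 * (\<delta> + Q x / \<delta>)" using each[of False] each[of True] by simp
    finally show "cmod (\<Sum>\<sigma>\<in>UNIV. qform B (hop L d x y \<sigma>) v) \<le> 2 * (\<delta> + Q x / \<delta>)" .
  qed (use Q \<delta> in simp)
  also have "(\<Sum>x\<in>sites L d. 2 * (\<delta> + Q x / \<delta>)) = 2 * (N * \<delta>) + 2 * ((\<Sum>x\<in>sites L d. Q x) / \<delta>)"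
    unfolding N_def by (simp add: sum.distrib sum_distrib_left sum_divide_distrib)
  also have "2 * real d * (2 * (N * \<delta>) + 2 * ((\<Sum>x\<in>sites L d. Q x) / \<delta>)) = 4 * d * (N * \<delta> + 2 * D / \<delta>)"
    unfolding sum_Q by (simp add: algebra_simps)
  finally have T: "cmod T \<le> 4 * d * (N * \<delta> + 2 * D / \<delta>)" .
  have "t * Re T \<le> \<bar>t\<bar> * \<bar>Re T\<bar>" by (simp flip: abs_mult)
  also have "\<dots> \<le> \<bar>t\<bar> * cmod T" by (simp add: abs_Re_le_cmod mult_left_mono)
  also have "\<dots> \<le> \<bar>t\<bar> * (4 * d * (N * \<delta> + 2 * D / \<delta>))" using T by (simp add: mult_left_mono)
  also have "\<dots> = 32 * real d ^ 2 * t\<^sup>2 * N / U + U * D"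
    unfolding \<delta>_def using U d t by (simp add: field_simps power2_eq_square)
  finally show ?thesis unfolding T_def B_def N_def D_def qform_Dop by simp
qed

lemma hubbard_lower_bound:
  assumes "L > 0" "U > 0" "d \<ge> 1" "t \<noteq> 0" and v: "sqnorm (hf_basis L d) v = 1"
  shows "- h * Re (qform (hf_basis L d) (Mop L d) v) - 32 * real d ^ 2 * t\<^sup>2 * real (L ^ d) / U
         \<le> Re (qform (hf_basis L d) (H_Hub U t h L d) v)"
  using hubbard_kinetic_le[OF assms] unfolding qform_H_Hub by simp

definition neel_fock :: "nat \<Rightarrow> nat \<Rightarrow> nat set" where
  "neel_fock L d = (\<lambda>x. mode x (stag L d x = 1)) ` sites L d"

lemma mode_in_neel_fock: "mode x \<sigma> \<in> neel_fock L d \<longleftrightarrow> x \<in> sites L d \<and> \<sigma> = (stag L d x = 1)"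
  unfolding neel_fock_def by (auto simp: mode_eq_iff)

lemma neel_fock_hf: "neel_fock L d \<in> hf_basis L d"
proof -
  have "neel_fock L d \<subseteq> {0..<2 * L ^ d}" unfolding neel_fock_def sites_def mode_def by auto
  moreover have "inj_on (\<lambda>x. mode x (stag L d x = 1)) (sites L d)" by (auto intro!: inj_onI simp: mode_eq_iff)
  then have "card (neel_fock L d) = L ^ d" unfolding neel_fock_def by (simp add: card_image)
  ultimately show ?thesis by (simp add: hf_basis_def fock_basis_def)
qed

lemma H_Hub_neel_fock: "H_Hub U t h L d (neel_fock L d) (neel_fock L d) = - complex_of_real (h * (real (L ^ d) / 2))"
proof -
  let ?S = "neel_fock L d"
  have S: "?S \<in> fock_basis L d" by (rule hf_basis_fock[OF neel_fock_hf])
  have dbl: "doubly_occupied L d ?S = 0"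
    unfolding doubly_occupied_def by (intro sum.neutral) (auto simp: mode_in_neel_fock)
  have stag: "fock_stag L d ?S = real (L ^ d) / 2"
    unfolding fock_stag_def staggered_sum_neel[symmetric]
    by (intro sum.cong) (use stag_cases in \<open>auto simp: mode_in_neel_fock\<close>)
  have "hop L d x y \<sigma> ?S ?S = 0" if "x \<noteq> y" for x y \<sigma>
  proof (rule ccontr)
    assume "hop L d x y \<sigma> ?S ?S \<noteq> 0"
    from hop_nonzero[OF S this] have "mode x \<sigma> \<in> ?S" "?S - {mode x \<sigma>} = ?S - {mode y \<sigma>}" by auto
    moreover have "mode x \<sigma> \<noteq> mode y \<sigma>" using that by (simp add: mode_eq_iff)
    ultimately show False by blast
  qed
  then have "(\<Sum>(x, y)\<in>bond_pairs b. \<Sum>\<sigma>\<in>UNIV. hop L d x y \<sigma> ?S ?S) = 0" if "b \<in> bonds L d" for b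
    using bond_pair_neighbours[OF that] by (intro sum.neutral) auto
  then have "Top t L d ?S ?S = 0" unfolding Top_eq_hop_sum by simp
  then show ?thesis unfolding H_Hub_def Dop_diagonal[OF S] Mop_diagonal[OF S] dbl stag by simp
qed

lemma hubbard_magnetization_deficit:
  assumes L: "L > 0" and U: "U > 0" and d: "d \<ge> 1" and t: "t \<noteq> 0"
    and h: "h > 0" and \<beta>: "\<beta> > 0" and a: "a > 0"
  shows "\<exists>g. gibbs (hf_basis L d) (H_Hub U t h L d) \<beta> (Mop L d) = complex_of_real g \<and>
             g \<le> real (L ^ d) / 2 \<and>
             real (L ^ d) / 2 - g \<le> (2 * (32 * real d ^ 2 * t\<^sup>2 * real (L ^ d) / U) + a) / h
                                    + 2 * (real (L ^ d) / 2) * 4 ^ (L ^ d) * exp (- \<beta> * a)"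
proof -
  define B where "B = hf_basis L d"
  define N where "N = real (L ^ d)"
  define E where "E = 32 * real d ^ 2 * t\<^sup>2 * N / U"
  define w where "w S = (if S = neel_fock L d then 1 else 0 :: complex)" for S
  have fin: "finite B" and neel: "neel_fock L d \<in> B" unfolding B_def by (simp_all add: neel_fock_hf)
  have obs: "qform B (Mop L d) v \<in> complex_of_real ` {- (N / 2)..N / 2}" if "sqnorm B v = 1" for v
  proof (rule qform_diagonal_range[OF fin _ _ that])
    show "Mop L d S' S = (if S' = S then complex_of_real (fock_stag L d S') else 0)"
      if "S' \<in> B" "S \<in> B" for S' S
      using that Mop_diagonal[OF hf_basis_fock] unfolding B_def by auto
    have abs_stag: "\<bar>fock_stag L d S\<bar> \<le> N / 2" for S
      unfolding fock_stag_def N_def by (rule abs_staggered_sum_le) simp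
    show "- (N / 2) \<le> fock_stag L d S \<and> fock_stag L d S \<le> N / 2" for S
      using abs_stag[of S] unfolding abs_le_iff by linarith
  qed
  have lower: "- h * Re (qform B (Mop L d) v) - E \<le> Re (qform B (H_Hub U t h L d) v)"
    if "sqnorm B v = 1" for v
    using hubbard_lower_bound[OF L U d t that[unfolded B_def]] unfolding B_def E_def N_def .
  have E: "E \<ge> 0" unfolding E_def N_def using U by simp
  have trial: "Re (qform B (H_Hub U t h L d) w) \<le> E - h * (N / 2)"
    unfolding w_def qform_basis_vector[OF fin neel] H_Hub_neel_fock N_def using E by simp
  obtain g where g: "gibbs B (H_Hub U t h L d) \<beta> (Mop L d) = complex_of_real g" "g \<le> N / 2"
    "N / 2 - g \<le> (2 * E + a) / h + 2 * (N / 2) * card B * exp (- \<beta> * a)"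
    using gibbs_near_max[OF fin hermitian_H_Hub[of L d U t h, folded B_def] obs lower
        sqnorm_basis_vector[OF fin neel, folded w_def] trial \<beta> h a]
    by blast
  have "real (card B) \<le> 4 ^ (L ^ d)"
    using card_hf_basis_le[of L d] unfolding B_def by (metis of_nat_le_iff of_nat_numeral of_nat_power)
  then have "2 * (N / 2) * card B * exp (- \<beta> * a) \<le> 2 * (N / 2) * 4 ^ (L ^ d) * exp (- \<beta> * a)"
    unfolding N_def by (intro mult_right_mono mult_left_mono) simp_all
  then have "N / 2 - g \<le> (2 * E + a) / h + 2 * (N / 2) * 4 ^ (L ^ d) * exp (- \<beta> * a)"
    using g(3) by linarith
  then show ?thesis using g(1,2) unfolding B_def N_def E_def by blast
qed

definition mag_error :: "nat \<Rightarrow> real \<Rightarrow> real \<Rightarrow> real \<Rightarrow> real \<Rightarrow> real" where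
  "mag_error d t l0 hmin U
     = (64 * real d ^ 2 * t\<^sup>2 / U + 4 * t\<^sup>2 / l0 * ((ln 4 + sqrt U) / U)) / hmin + exp (- sqrt U)"

lemma mag_error_tendsto_0: "(mag_error d t l0 hmin \<longlongrightarrow> 0) at_top"
proof -
  have "((\<lambda>U::real. 1 / U) \<longlongrightarrow> 0) at_top" "((\<lambda>U::real. (ln 4 + sqrt U) / U) \<longlongrightarrow> 0) at_top"
    "((\<lambda>U::real. exp (- sqrt U)) \<longlongrightarrow> 0) at_top"
    by real_asymp+
  then have "((\<lambda>U. (64 * real d ^ 2 * t\<^sup>2 * (1 / U) + 4 * t\<^sup>2 / l0 * ((ln 4 + sqrt U) / U)) * (1 / hmin)
              + exp (- sqrt U)) \<longlongrightarrow> (64 * real d ^ 2 * t\<^sup>2 * 0 + 4 * t\<^sup>2 / l0 * 0) * (1 / hmin) + 0) at_top"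
    by (intro tendsto_intros)
  then show ?thesis by (simp add: mag_error_def[abs_def])
qed

text \<open>With \<open>a = |\<Lambda>| (ln 4 + \<surd>U) / \<beta>\<close> the Boltzmann factor \<open>e\<^sup>-\<^sup>\<beta>\<^sup>a\<close> beats the
  dimension \<open>4\<^sup>|\<^sup>\<Lambda>\<^sup>|\<close> of the Fock space, while \<open>a / |\<Lambda>| \<le> 4 t\<^sup>2 (ln 4 + \<surd>U) / (l\<^sub>0 U)\<close>
  because \<open>\<beta> J\<^sub>0(U) \<ge> l\<^sub>0\<close>.\<close>
lemma deficit_le_mag_error:
  fixes N E g :: real and n :: nat
  assumes N: "N = real n" "n \<ge> 1" and hmin: "0 < hmin" "hmin \<le> h" and \<beta>: "\<beta> > 0" and U: "U > 0"
    and l0: "l0 > 0" "l0 \<le> \<beta> * J0 t U" and E: "0 \<le> E" "E \<le> 64 * real d ^ 2 * t\<^sup>2 * N / U"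
    and g: "N / 2 - g \<le> (E + N * (ln 4 + sqrt U) / \<beta>) / h + N * 4 ^ n * exp (- \<beta> * (N * (ln 4 + sqrt U) / \<beta>))"
  shows "N / 2 - g \<le> N * mag_error d t l0 hmin U"
proof -
  define s where "s = ln 4 + sqrt U"
  define K where "K = 64 * real d ^ 2 * t\<^sup>2 / U + 4 * t\<^sup>2 / l0 * (s / U)"
  have s: "s \<ge> 0" unfolding s_def using U by simp
  have N1: "N \<ge> 1" using N by simp
  have K: "K \<ge> 0" unfolding K_def using s U l0 by simp
  have "s / \<beta> \<le> 4 * t\<^sup>2 / l0 * (s / U)"
  proof -
    have "l0 * U \<le> \<beta> * (4 * t\<^sup>2)" using l0(2) U unfolding J0_def by (simp add: field_simps)
    then have "s * (l0 * U) \<le> s * (\<beta> * (4 * t\<^sup>2))" using s by (rule mult_left_mono)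
    then show ?thesis using \<beta> l0 U by (simp add: field_simps)
  qed
  then have "N * (s / \<beta>) \<le> N * (4 * t\<^sup>2 / l0 * (s / U))" by (rule mult_left_mono) (use N1 in simp)
  moreover have "E \<le> N * (64 * real d ^ 2 * t\<^sup>2 / U)" using E(2) by (simp add: mult_ac)
  ultimately have "E + N * s / \<beta> \<le> N * K" unfolding K_def by (simp add: algebra_simps)
  then have "(E + N * s / \<beta>) / h \<le> N * K / h" using hmin by (intro divide_right_mono) simp_all
  also have "\<dots> \<le> N * K / hmin" using hmin N1 K by (intro divide_left_mono) simp_all
  finally have kinetic: "(E + N * s / \<beta>) / h \<le> N * K / hmin" .
  have "\<beta> * (N * s / \<beta>) = N * ln 4 + N * sqrt U" using \<beta> by (simp add: s_def field_simps)
  then have "exp (- \<beta> * (N * s / \<beta>)) = exp (- (N * ln 4)) * exp (- (N * sqrt U))"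
    by (simp add: exp_add[symmetric])
  moreover have "(4::real) ^ n = exp (N * ln 4)" using N(1) by (simp add: exp_of_nat_mult)
  ultimately have "N * 4 ^ n * exp (- \<beta> * (N * s / \<beta>)) = N * exp (- (N * sqrt U))"
    by (simp add: exp_minus field_simps)
  also have "\<dots> \<le> N * exp (- sqrt U)" using N1 U by simp
  finally have "N * 4 ^ n * exp (- \<beta> * (N * s / \<beta>)) \<le> N * exp (- sqrt U)" .
  moreover have "N * mag_error d t l0 hmin U = N * K / hmin + N * exp (- sqrt U)"
    unfolding mag_error_def K_def s_def by (simp add: distrib_left)
  ultimately show ?thesis using g kinetic unfolding s_def by linarith
qed

lemma magnetization_difference_le:
  assumes d: "d \<ge> 1" and t: "t \<noteq> 0" and l0: "l0 > 0" and hmin: "0 < hmin" "hmin \<le> h"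
    and U: "U > 0" and \<beta>: "\<beta> > 0" "l0 \<le> \<beta> * J0 t U" and L: "L > 0"
  shows "cmod (m_Hub t \<beta> U h L d - m_Heis t \<beta> U h L d) \<le> mag_error d t l0 hmin U"
proof -
  define n where "n = L ^ d"
  define N where "N = real n"
  define a where "a = N * (ln 4 + sqrt U) / \<beta>"
  have n: "n \<ge> 1" unfolding n_def using L by simp
  have h: "h > 0" using hmin by simp
  have a: "a > 0" unfolding a_def N_def using n U \<beta> by (simp add: add_pos_nonneg)
  have deficit: "N / 2 - g \<le> N * mag_error d t l0 hmin U"
    if "0 \<le> E" "E \<le> 64 * real d ^ 2 * t\<^sup>2 * N / U" "C \<le> 4 ^ n"
       "N / 2 - g \<le> (E + a) / h + 2 * (N / 2) * C * exp (- \<beta> * a)" for E C g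
  proof (rule deficit_le_mag_error[OF N_def n hmin \<beta>(1) U l0 \<beta>(2) that(1,2)])
    have "2 * (N / 2) * C * exp (- \<beta> * a) \<le> N * 4 ^ n * exp (- \<beta> * a)"
      using that(3) n unfolding N_def by (simp add: mult_right_mono)
    then show "N / 2 - g \<le> (E + N * (ln 4 + sqrt U) / \<beta>) / h
        + N * 4 ^ n * exp (- \<beta> * (N * (ln 4 + sqrt U) / \<beta>))"
      using that(4) unfolding a_def by linarith
  qed
  obtain g1 where g1: "gibbs (hf_basis L d) (H_Hub U t h L d) \<beta> (Mop L d) = complex_of_real g1" "g1 \<le> N / 2"
    "N / 2 - g1 \<le> N * mag_error d t l0 hmin U"
  proof -
    from hubbard_magnetization_deficit[OF L U d t h \<beta>(1) a] obtain g where
      "gibbs (hf_basis L d) (H_Hub U t h L d) \<beta> (Mop L d) = complex_of_real g" "g \<le> N / 2"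
      "N / 2 - g \<le> (2 * (32 * real d ^ 2 * t\<^sup>2 * N / U) + a) / h + 2 * (N / 2) * 4 ^ n * exp (- \<beta> * a)"
      unfolding N_def n_def by blast
    moreover have "N / 2 - g \<le> N * mag_error d t l0 hmin U"
      by (rule deficit[OF _ _ order.refl calculation(3)]) (use U in \<open>simp_all add: N_def\<close>)
    ultimately show thesis using that by blast
  qed
  obtain g2 where g2: "gibbs (spin_basis L d) (H_Heis (J0 t U) h L d) \<beta> (Mspin L d) = complex_of_real g2"
    "g2 \<le> N / 2" "N / 2 - g2 \<le> N * mag_error d t l0 hmin U"
  proof -
    have J0: "J0 t U \<ge> 0" unfolding J0_def using U by simp
    from heisenberg_magnetization_deficit[OF L J0 h \<beta>(1) a] obtain g where g:
      "gibbs (spin_basis L d) (H_Heis (J0 t U) h L d) \<beta> (Mspin L d) = complex_of_real g" "g \<le> N / 2"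
      "N / 2 - g \<le> (2 * (J0 t U * (d * N)) + a) / h + 2 * (N / 2) * 2 ^ n * exp (- \<beta> * a)"
      unfolding N_def n_def by blast
    have "2 * (J0 t U * (d * N)) \<le> 64 * real d ^ 2 * t\<^sup>2 * N / U"
    proof -
      have "real d \<le> real d ^ 2" using d by (simp add: power2_eq_square)
      then have "8 * real d * t\<^sup>2 * N \<le> 64 * real d ^ 2 * t\<^sup>2 * N" unfolding N_def by (simp add: mult_mono)
      then show ?thesis unfolding J0_def using U by (simp add: divide_right_mono field_simps)
    qed
    moreover have "(2::real) ^ n \<le> 4 ^ n" by (simp add: power_mono)
    ultimately have "N / 2 - g \<le> N * mag_error d t l0 hmin U"
      using J0 g(3) by (intro deficit) (simp_all add: N_def)
    with g(1,2) show thesis using that by blast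
  qed
  have "m_Hub t \<beta> U h L d - m_Heis t \<beta> U h L d = complex_of_real ((g1 - g2) / N)"
    unfolding m_Hub_def m_Heis_def g1(1) g2(1) N_def n_def by (simp add: diff_divide_distrib)
  then have "cmod (m_Hub t \<beta> U h L d - m_Heis t \<beta> U h L d) = \<bar>g1 - g2\<bar> / N"
    using n by (simp only: norm_of_real abs_divide) (simp add: N_def)
  also have "\<dots> \<le> mag_error d t l0 hmin U"
    using g1(2,3) g2(2,3) n unfolding N_def by (simp add: divide_le_eq abs_le_iff mult.commute)
  finally show ?thesis .
qed

theorem theorem1p2:
  fixes d :: nat and t l0 h0 :: real and I :: "real set"
  assumes "d \<ge> 1" and "t \<noteq> 0" and "l0 > 0" and "h0 > 0"
    and "compact I" and "I \<noteq> {}" and "I \<subseteq> {0<..h0}"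
  shows "\<exists>(U0::real) (\<epsilon>::real \<Rightarrow> real \<Rightarrow> real).
           (\<forall>U \<beta>. \<epsilon> U \<beta> \<ge> 0)
         \<and> (\<forall>U \<beta> (L::nat) h. U \<ge> U0 \<longrightarrow> \<beta> > 0 \<longrightarrow> \<beta> * J0 t U \<ge> l0 \<longrightarrow>
               even L \<longrightarrow> L > 0 \<longrightarrow> h \<in> I \<longrightarrow>
               cmod (m_Hub t \<beta> U h L d - m_Heis t \<beta> U h L d) \<le> \<epsilon> U \<beta>)
         \<and> ((\<lambda>U. SUP \<beta>\<in>{\<beta>. \<beta> > 0 \<and> \<beta> * J0 t U \<ge> l0}. ereal (\<epsilon> U \<beta>)) \<longlongrightarrow> 0) at_top"
proof -
  obtain hmin where hmin: "hmin \<in> I" "\<And>h. h \<in> I \<Longrightarrow> hmin \<le> h"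
    using compact_attains_inf[OF assms(5,6)] by blast
  have "hmin > 0" using hmin(1) assms(7) by auto
  define \<epsilon> where "\<epsilon> = (\<lambda>(U::real) (\<beta>::real). max 0 (mag_error d t l0 hmin U))"
  have "\<forall>U \<beta> (L::nat) h. U \<ge> 1 \<longrightarrow> \<beta> > 0 \<longrightarrow> \<beta> * J0 t U \<ge> l0 \<longrightarrow> even L \<longrightarrow> L > 0 \<longrightarrow> h \<in> I \<longrightarrow>
          cmod (m_Hub t \<beta> U h L d - m_Heis t \<beta> U h L d) \<le> \<epsilon> U \<beta>"
  proof (intro allI impI)
    fix U \<beta> h and L :: nat
    assume "U \<ge> 1" "\<beta> > 0" "\<beta> * J0 t U \<ge> l0" "L > 0" "h \<in> I"
    then show "cmod (m_Hub t \<beta> U h L d - m_Heis t \<beta> U h L d) \<le> \<epsilon> U \<beta>"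
      using magnetization_difference_le[OF assms(1-3) \<open>hmin > 0\<close> hmin(2)[of h], of U \<beta> L]
      unfolding \<epsilon>_def by (simp add: le_max_iff_disj)
  qed
  moreover have "((\<lambda>U. SUP \<beta>\<in>{\<beta>. \<beta> > 0 \<and> \<beta> * J0 t U \<ge> l0}. ereal (\<epsilon> U \<beta>)) \<longlongrightarrow> 0) at_top"
  proof (rule Lim_transform_eventually)
    have "((\<lambda>U. max 0 (mag_error d t l0 hmin U)) \<longlongrightarrow> 0) at_top"
      using tendsto_max[OF tendsto_const mag_error_tendsto_0, of 0] by simp
    then show "((\<lambda>U. ereal (max 0 (mag_error d t l0 hmin U))) \<longlongrightarrow> 0) at_top"
      unfolding zero_ereal_def by (rule tendsto_ereal)
    have "{\<beta>. \<beta> > 0 \<and> \<beta> * J0 t U \<ge> l0} \<noteq> {}" if "U > 0" for U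
    proof -
      have "J0 t U > 0" unfolding J0_def using that assms(2) by simp
      then have "l0 / J0 t U \<in> {\<beta>. \<beta> > 0 \<and> \<beta> * J0 t U \<ge> l0}" using assms(3) by simp
      then show ?thesis by blast
    qed
    then show "\<forall>\<^sub>F U in at_top. ereal (max 0 (mag_error d t l0 hmin U))
                 = (SUP \<beta>\<in>{\<beta>. \<beta> > 0 \<and> \<beta> * J0 t U \<ge> l0}. ereal (\<epsilon> U \<beta>))"
      unfolding \<epsilon>_def by (intro eventually_at_top_linorderI[of 1]) simp
  qed
  moreover have "\<forall>U \<beta>. \<epsilon> U \<beta> \<ge> 0" by (simp add: \<epsilon>_def)
  ultimately show ?thesis by blast
qed

end
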